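(* Let $h:[\alpha,\beta]\to\mathbb R$ be a non-negative Lipschitz function and let $r\ge1$. Then there exists a sequence of non-negative Lipschitz functions $h_k:[\alpha,\beta]\to\mathbb R$ such that: (i) $\mathcal H^1(\Gamma_k)=r\,\mathcal H^1(\Gamma)$ for every $k$; (ii) $h_k(\alpha)=h(\alpha)$ and $h_k(\beta)=h(\beta)$ for every $k$; (iii) $h\le h_k$ for every $k$; (iv) $h_k\to h$ uniformly as $k\to\infty$; (v) $\mathcal H^1\llcorner\Gamma_k\stackrel{*}{\rightharpoonup} r\,\mathcal H^1\llcorner\Gamma$ as $k\to\infty$, where $\Gamma_k$ and $\Gamma$ denote the graphs of $h_k$ and $h$. *)

theory Defs
  imports "HOL-Analysis.Analysis"
begin

text \<open>Size-delta approximating outer measure for the one-dimensional Hausdorff measure,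
  normalised so that a set of diameter d counts d (standard normalisation: H^1 = L^1 on the line).\<close>
definition hausdorff1_delta :: "real \<Rightarrow> 'a::metric_space set \<Rightarrow> ennreal" where
  "hausdorff1_delta \<delta> A =
     (INF C \<in> {C :: nat \<Rightarrow> 'a set. A \<subseteq> (\<Union>i. C i) \<and> (\<forall>i. bounded (C i) \<and> diameter (C i) \<le> \<delta>)}.
        (\<Sum>i. ennreal (diameter (C i))))"

definition hausdorff1 :: "'a::metric_space set \<Rightarrow> ennreal" where
  "hausdorff1 A = (SUP \<delta> \<in> {0<..}. hausdorff1_delta \<delta> A)"

definition hausdorff1_restr :: "'a::metric_space set \<Rightarrow> 'a measure" where
  "hausdorff1_restr S = measure_of UNIV (sets borel) (\<lambda>A. hausdorff1 (A \<inter> S))"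

definition graph_on :: "real \<Rightarrow> real \<Rightarrow> (real \<Rightarrow> real) \<Rightarrow> (real \<times> real) set" where
  "graph_on a b f = {(x, f x) | x. x \<in> {a..b}}"

definition weak_star_conv :: "(nat \<Rightarrow> (real \<times> real) measure) \<Rightarrow> real \<Rightarrow> (real \<times> real) measure \<Rightarrow> bool" where
  "weak_star_conv \<mu>s c \<mu> \<longleftrightarrow>
     (\<forall>\<phi> :: real \<times> real \<Rightarrow> real. continuous_on UNIV \<phi> \<and> compact (closure {z. \<phi> z \<noteq> 0}) \<longrightarrow>
        (\<lambda>k. integral\<^sup>L (\<mu>s k) \<phi>) \<longlonglongrightarrow> c * integral\<^sup>L \<mu> \<phi>)"

end

(*
  On every cell of a fine uniform partition of [alpha, beta] we add to h a tent of height at most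
  eta. The length of the graph over the cell depends continuously on the height of the tent; it
  is the length l of the graph of h for height 0 and at least 2 eta - L w >= r l for full height
  when the cell width w is small, so some intermediate height multiplies the length over that cell
  by exactly r. Summing over the cells gives (i); the tents vanish at the nodes and have height at
  most eta, which gives (ii)-(iv) as eta -> 0. For (v), on each vertical strip over a cell the
  restricted measures differ exactly by the factor r, and a continuous test function is nearly
  constant on the part of either graph above a cell, so both integrals are approximated by the
  same Riemann sums.
*)
theory Submission
  imports Defs
begin

section \<open>Metric outer measures\<close>

definition positively_separated :: "'a::metric_space set \<Rightarrow> 'a set \<Rightarrow> bool" where
  "positively_separated A B \<longleftrightarrow> (\<exists>d>0. \<forall>a\<in>A. \<forall>b\<in>B. d \<le> dist a b)"

lemma positively_separated_sym: "positively_separated A B \<longleftrightarrow> positively_separated B A"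
  unfolding positively_separated_def by (metis dist_commute)

lemma positively_separated_subset:
  "positively_separated A B \<Longrightarrow> A' \<subseteq> A \<Longrightarrow> B' \<subseteq> B \<Longrightarrow> positively_separated A' B'"
  unfolding positively_separated_def by blast

lemma positively_separated_UN_left:
  assumes "finite I" "\<And>i. i \<in> I \<Longrightarrow> positively_separated (A i) B"
  shows "positively_separated (\<Union>i\<in>I. A i) B"
  using assms
proof (induction I rule: finite_induct)
  case empty
  show ?case by (auto simp: positively_separated_def intro: exI[of _ 1])
next
  case (insert i I)
  obtain d where "d > 0" "\<forall>a\<in>A i. \<forall>b\<in>B. d \<le> dist a b"
    using insert.prems[of i] by (auto simp: positively_separated_def)
  moreover obtain e where "e > 0" "\<forall>a\<in>(\<Union>i\<in>I. A i). \<forall>b\<in>B. e \<le> dist a b"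
    using insert.IH insert.prems by (auto simp: positively_separated_def)
  ultimately show ?case
    unfolding positively_separated_def by (intro exI[of _ "min d e"]) force
qed

lemma positively_separated_level_sets:
  fixes D :: "'a::metric_space \<Rightarrow> real"
  assumes D: "\<And>x y. D x \<le> D y + dist x y"
    and "\<forall>x\<in>A. D x \<le> a" "\<forall>y\<in>B. b \<le> D y" "a < b"
  shows "positively_separated A B"
  unfolding positively_separated_def
proof (intro exI[of _ "b - a"] conjI ballI)
  fix x y assume "x \<in> A" "y \<in> B"
  then show "b - a \<le> dist x y"
    using assms(2,3) D[of y x] by (force simp: dist_commute)
qed (use assms in simp)

lemma sum_lessThan_double:
  fixes g :: "nat \<Rightarrow> 'b::comm_monoid_add"
  shows "(\<Sum>k<2*N. g k) = (\<Sum>i<N. g (2*i)) + (\<Sum>i<N. g (2*i+1))"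
proof (induction N)
  case (Suc N)
  have "2 * Suc N = Suc (Suc (2*N))" by simp
  then show ?case using Suc by (simp add: ac_simps)
qed simp

lemma ennreal_suminf_tail_tendsto_0:
  fixes f :: "nat \<Rightarrow> ennreal"
  assumes fin: "(\<Sum>n. f n) \<noteq> \<infinity>"
  shows "(\<lambda>n. \<Sum>k. f (k + n)) \<longlonglongrightarrow> 0"
proof -
  have f: "f n = ennreal (enn2real (f n))" for n
    using fin ennreal_suminf_lessD[of f top n] by (simp add: less_top ennreal_enn2real_if)
  have "summable (\<lambda>n. enn2real (f n))"
    using fin by (intro summable_suminf_not_top) (simp_all flip: f)
  then have "(\<lambda>n. \<Sum>k. enn2real (f (k + n))) \<longlonglongrightarrow> 0"
    by (rule suminf_exist_split2)
  moreover have "(\<Sum>k. f (k + n)) = ennreal (\<Sum>k. enn2real (f (k + n)))" for n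
    by (subst f) (intro suminf_ennreal2 summable_ignore_initial_segment \<open>summable _\<close>, simp_all)
  moreover have "0 \<le> (\<Sum>k. enn2real (f (k + n)))" for n
    by (intro suminf_nonneg summable_ignore_initial_segment \<open>summable _\<close>) simp
  ultimately show ?thesis
    by (simp add: ennreal_tendsto_0_iff)
qed

lemma exists_step_becoming_true:
  assumes "n \<le> m" "P m" "\<not> P n"
  shows "\<exists>k\<ge>n. P (Suc k) \<and> \<not> P k"
  using assms
proof (induction m rule: dec_induct)
  case (step m)
  then show ?case by (cases "P m") auto
qed simp

lemma exists_inverse_Suc_layer:
  fixes t :: real
  assumes "0 < t"
  shows "1 / real (Suc n) \<le> t \<or> (\<exists>k. 1 / real (Suc (Suc (k + n))) \<le> t \<and> t < 1 / real (Suc (k + n)))"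
proof -
  obtain m where "1 / real (Suc m) < t"
    using assms by (metis inverse_eq_divide reals_Archimedean)
  moreover have "1 / real (Suc (max m n)) \<le> 1 / real (Suc m)"
    by (intro divide_left_mono) auto
  ultimately have "1 / real (Suc (max m n)) \<le> t"
    by linarith
  then show ?thesis
    using exists_step_becoming_true[of n "max m n" "\<lambda>j. 1 / real (Suc j) \<le> t"]
    by (metis le_add_diff_inverse2 max.cobounded2 not_le)
qed

locale metric_outer_measure =
  fixes \<mu> :: "'a::metric_space set \<Rightarrow> ennreal"
  assumes mono: "A \<subseteq> B \<Longrightarrow> \<mu> A \<le> \<mu> B"
    and empty: "\<mu> {} = 0"
    and countably_subadditive: "\<mu> (\<Union>n. C n) \<le> (\<Sum>n. \<mu> (C n))"
    and separated_superadditive: "positively_separated A B \<Longrightarrow> \<mu> A + \<mu> B \<le> \<mu> (A \<union> B)"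
begin

lemma subadditive_Un_UN: "\<mu> (X \<union> (\<Union>n. Y n)) \<le> \<mu> X + (\<Sum>n. \<mu> (Y n))"
proof -
  define A where "A n = (case n of 0 \<Rightarrow> X | Suc m \<Rightarrow> Y m)" for n
  have "X \<union> (\<Union>n. Y n) = (\<Union>n. A n)"
    by (auto simp: A_def split: nat.splits)
  then have "\<mu> (X \<union> (\<Union>n. Y n)) \<le> (\<Sum>n. \<mu> (A n))"
    using countably_subadditive by simp
  also have "\<dots> = \<mu> (A 0) + (\<Sum>n. \<mu> (A (Suc n)))"
    using suminf_offset[of "\<lambda>n. \<mu> (A n)" 1] by (simp add: add.commute)
  finally show ?thesis by (simp add: A_def)
qed

lemma subadditive: "\<mu> (A \<union> B) \<le> \<mu> A + \<mu> B"
proof -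
  have "(\<Union>n. if n = 0 then B else {}) = B" by auto
  moreover have "(\<Sum>n. \<mu> (if n = 0 then B else {})) = \<mu> B"
    by (subst suminf_finite[of "{0}"]) (auto simp: empty)
  ultimately show ?thesis
    using subadditive_Un_UN[of A "\<lambda>n. if n = 0 then B else {}"] by simp
qed

lemma separated_additive: "positively_separated A B \<Longrightarrow> \<mu> (A \<union> B) = \<mu> A + \<mu> B"
  by (simp add: antisym separated_superadditive subadditive)

lemma finite_separated_additive:
  fixes S :: "nat \<Rightarrow> 'a set"
  assumes "\<And>i j. i < j \<Longrightarrow> j < N \<Longrightarrow> positively_separated (S i) (S j)"
  shows "\<mu> (\<Union>i<N. S i) = (\<Sum>i<N. \<mu> (S i))"
  using assms
proof (induction N)
  case (Suc N)
  have "positively_separated (\<Union>i<N. S i) (S N)"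
    using Suc.prems by (intro positively_separated_UN_left) auto
  then have "\<mu> ((\<Union>i<N. S i) \<union> S N) = \<mu> (\<Union>i<N. S i) + \<mu> (S N)"
    by (rule separated_additive)
  then show ?case
    using Suc by (simp add: lessThan_Suc Un_commute)
qed (simp add: empty)

lemma sum_le_twice_if_nonadjacent_separated:
  fixes R :: "nat \<Rightarrow> 'a set"
  assumes sub: "\<And>k. R k \<subseteq> X"
    and sep: "\<And>i j. i + 2 \<le> j \<Longrightarrow> positively_separated (R i) (R j)"
  shows "(\<Sum>k<N. \<mu> (R k)) \<le> 2 * \<mu> X"
proof -
  have parity: "(\<Sum>i<N. \<mu> (R (2*i+p))) \<le> \<mu> X" for p
  proof -
    have "(\<Sum>i<N. \<mu> (R (2*i+p))) = \<mu> (\<Union>i<N. R (2*i+p))"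
      by (rule finite_separated_additive[symmetric]) (simp add: sep)
    also have "\<dots> \<le> \<mu> X"
      using sub by (intro mono) auto
    finally show ?thesis .
  qed
  have "(\<Sum>k<N. \<mu> (R k)) \<le> (\<Sum>k<2*N. \<mu> (R k))"
    by (rule sum_mono2) auto
  also have "\<dots> = (\<Sum>i<N. \<mu> (R (2*i+0))) + (\<Sum>i<N. \<mu> (R (2*i+1)))"
    by (simp add: sum_lessThan_double)
  also have "\<dots> \<le> \<mu> X + \<mu> X"
    by (intro add_mono parity)
  finally show ?thesis by (simp add: mult_2)
qed

lemma suminf_layers_le:
  fixes D :: "'a \<Rightarrow> real"
  assumes D: "\<And>x y. D x \<le> D y + dist x y"
  shows "(\<Sum>k. \<mu> {x\<in>X. 1 / real (Suc (Suc k)) \<le> D x \<and> D x < 1 / real (Suc k)}) \<le> 2 * \<mu> X"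
proof -
  define R where "R k = {x\<in>X. 1 / real (Suc (Suc k)) \<le> D x \<and> D x < 1 / real (Suc k)}" for k
  have "(\<Sum>k<N. \<mu> (R k)) \<le> 2 * \<mu> X" for N
  proof (rule sum_le_twice_if_nonadjacent_separated)
    show "R k \<subseteq> X" for k by (auto simp: R_def)
    fix i j :: nat assume "i + 2 \<le> j"
    then have "1 / real (Suc j) < 1 / real (Suc (Suc i))"
      by (intro divide_strict_left_mono) auto
    then have "positively_separated (R j) (R i)"
      by (intro positively_separated_level_sets[OF D, where a = "1 / real (Suc j)"
            and b = "1 / real (Suc (Suc i))"]) (auto simp: R_def)
    then show "positively_separated (R i) (R j)"
      by (simp add: positively_separated_sym)
  qed
  then show ?thesis
    unfolding R_def by (simp add: suminf_eq_SUP SUP_least)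
qed

text \<open>The points of \<open>X - F\<close> are layered by their distance to \<open>F\<close>. Non-adjacent layers are
  positively separated, so the layer measures are summable and the layers close to \<open>F\<close> carry
  a vanishing tail.\<close>
lemma closed_split:
  assumes "closed F"
  shows "\<mu> (X \<inter> F) + \<mu> (X - F) = \<mu> X"
proof (rule antisym)
  show "\<mu> X \<le> \<mu> (X \<inter> F) + \<mu> (X - F)"
    using subadditive[of "X \<inter> F" "X - F"] by (simp add: Int_Diff_Un)
  show "\<mu> (X \<inter> F) + \<mu> (X - F) \<le> \<mu> X"
  proof (cases "F = {} \<or> \<mu> X = \<infinity>")
    case True
    then show ?thesis by (auto simp: empty)
  next
    case False
    define D where "D x = infdist x F" for x
    have D: "D x \<le> D y + dist x y" for x y
      unfolding D_def by (rule infdist_triangle)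
    define A where "A n = {x\<in>X. 1 / real (Suc n) \<le> D x}" for n
    define R where "R k = {x\<in>X. 1 / real (Suc (Suc k)) \<le> D x \<and> D x < 1 / real (Suc k)}" for k
    have near: "\<mu> (X \<inter> F) + \<mu> (A n) \<le> \<mu> X" for n
    proof -
      have "positively_separated (X \<inter> F) (A n)"
        by (rule positively_separated_level_sets[OF D, where a = 0 and b = "1 / real (Suc n)"])
          (auto simp: D_def A_def)
      then have "\<mu> (X \<inter> F) + \<mu> (A n) = \<mu> ((X \<inter> F) \<union> A n)"
        by (simp add: separated_additive)
      also have "\<dots> \<le> \<mu> X"
        by (intro mono) (auto simp: A_def)
      finally show ?thesis .
    qed
    have "(\<Sum>k. \<mu> (R k)) \<le> 2 * \<mu> X"
      unfolding R_def by (rule suminf_layers_le[OF D])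
    also have "\<dots> < \<infinity>"
      using False by (simp add: ennreal_mult_less_top top.not_eq_extremum)
    finally have tail: "(\<lambda>n. \<Sum>k. \<mu> (R (k + n))) \<longlonglongrightarrow> 0"
      by (intro ennreal_suminf_tail_tendsto_0) simp
    have "\<mu> (X \<inter> F) + \<mu> (X - F) \<le> \<mu> X + (\<Sum>k. \<mu> (R (k + n)))" for n
    proof -
      have "X - F \<subseteq> A n \<union> (\<Union>k. R (k + n))"
      proof
        fix x assume x: "x \<in> X - F"
        then have "0 < D x"
          using infdist_pos_not_in_closed[OF assms] False by (auto simp: D_def)
        then show "x \<in> A n \<union> (\<Union>k. R (k + n))"
          using exists_inverse_Suc_layer[of "D x" n] x by (auto simp: A_def R_def)
      qed
      then have "\<mu> (X - F) \<le> \<mu> (A n) + (\<Sum>k. \<mu> (R (k + n)))"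
        using mono subadditive_Un_UN order_trans by blast
      then have "\<mu> (X \<inter> F) + \<mu> (X - F) \<le> (\<mu> (X \<inter> F) + \<mu> (A n)) + (\<Sum>k. \<mu> (R (k + n)))"
        by (simp add: add.assoc add_left_mono)
      also have "\<dots> \<le> \<mu> X + (\<Sum>k. \<mu> (R (k + n)))"
        by (intro add_right_mono near)
      finally show ?thesis .
    qed
    moreover have "(\<lambda>n. \<mu> X + (\<Sum>k. \<mu> (R (k + n)))) \<longlonglongrightarrow> \<mu> X + 0"
      by (intro tendsto_add tendsto_const tail)
    ultimately show ?thesis
      by (intro LIMSEQ_le_const[of "\<lambda>n. \<mu> X + (\<Sum>k. \<mu> (R (k + n)))"]) auto
  qed
qed

lemma measure_space_borel: "measure_space UNIV (sets borel) \<mu>"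
proof -
  have "outer_measure_space (Pow UNIV) \<mu>"
    unfolding outer_measure_space_def positive_def increasing_def countably_subadditive_def
    using mono empty countably_subadditive by auto
  then have ms: "measure_space UNIV (lambda_system UNIV (Pow UNIV) \<mu>) \<mu>"
    by (rule sigma_algebra.caratheodory_lemma[OF sigma_algebra_Pow])
  then interpret L: sigma_algebra UNIV "lambda_system UNIV (Pow UNIV) \<mu>"
    by (simp add: measure_space_def)
  have closed_in: "C \<in> lambda_system UNIV (Pow UNIV) \<mu>" if "closed C" for C
    unfolding algebra.lambda_system_eq[OF algebra_Pow] using closed_split[OF that] by auto
  have "U \<in> lambda_system UNIV (Pow UNIV) \<mu>" if "open U" for U
    using L.compl_sets[OF closed_in[of "- U"]] that by (simp add: Compl_eq_Diff_UNIV[symmetric] closed_Compl)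
  then have "sets borel \<subseteq> lambda_system UNIV (Pow UNIV) \<mu>"
    unfolding sets_borel by (intro L.sigma_sets_subset) auto
  then show ?thesis
    using measure_down[OF ms] sets.sigma_algebra_axioms[of borel] by simp
qed

lemma restrict: "metric_outer_measure (\<lambda>A. \<mu> (A \<inter> S))"
proof
  show "\<mu> (A \<inter> S) \<le> \<mu> (B \<inter> S)" if "A \<subseteq> B" for A B
    using that by (intro mono) blast
  show "\<mu> ({} \<inter> S) = 0"
    by (simp add: empty)
  show "\<mu> ((\<Union>n. C n) \<inter> S) \<le> (\<Sum>n. \<mu> (C n \<inter> S))" for C
    using countably_subadditive[of "\<lambda>n. C n \<inter> S"] by (simp add: Int_UN_distrib2)
  show "\<mu> (A \<inter> S) + \<mu> (B \<inter> S) \<le> \<mu> ((A \<union> B) \<inter> S)" if "positively_separated A B" for A B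
    using separated_superadditive[OF positively_separated_subset[OF that, of "A \<inter> S" "B \<inter> S"]]
    by (simp add: Int_Un_distrib2)
qed

end

section \<open>One-dimensional Hausdorff measure\<close>

definition hausdorff1_covers :: "real \<Rightarrow> 'a::metric_space set \<Rightarrow> (nat \<Rightarrow> 'a set) set" where
  "hausdorff1_covers \<delta> A = {C. A \<subseteq> (\<Union>i. C i) \<and> (\<forall>i. bounded (C i) \<and> diameter (C i) \<le> \<delta>)}"

lemma hausdorff1_delta_eq_INF:
  "hausdorff1_delta \<delta> A = (INF C\<in>hausdorff1_covers \<delta> A. \<Sum>i. ennreal (diameter (C i)))"
  unfolding hausdorff1_delta_def hausdorff1_covers_def by simp

lemma hausdorff1_delta_mono: "A \<subseteq> B \<Longrightarrow> hausdorff1_delta \<delta> A \<le> hausdorff1_delta \<delta> B"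
  unfolding hausdorff1_delta_eq_INF by (rule INF_superset_mono) (auto simp: hausdorff1_covers_def)

lemma hausdorff1_delta_antimono: "\<delta> \<le> \<delta>' \<Longrightarrow> hausdorff1_delta \<delta>' A \<le> hausdorff1_delta \<delta> A"
  unfolding hausdorff1_delta_eq_INF
  by (rule INF_superset_mono) (auto simp: hausdorff1_covers_def intro: order_trans)

lemma hausdorff1_delta_le_cover:
  "C \<in> hausdorff1_covers \<delta> A \<Longrightarrow> hausdorff1_delta \<delta> A \<le> (\<Sum>i. ennreal (diameter (C i)))"
  unfolding hausdorff1_delta_eq_INF by (rule INF_lower)

lemma hausdorff1_delta_le_hausdorff1: "0 < \<delta> \<Longrightarrow> hausdorff1_delta \<delta> A \<le> hausdorff1 A"
  unfolding hausdorff1_def by (rule SUP_upper) auto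

lemma hausdorff1_le_iff: "hausdorff1 A \<le> x \<longleftrightarrow> (\<forall>\<delta>>0. hausdorff1_delta \<delta> A \<le> x)"
  unfolding hausdorff1_def by (auto simp: SUP_le_iff)

lemma hausdorff1_mono: "A \<subseteq> B \<Longrightarrow> hausdorff1 A \<le> hausdorff1 B"
  unfolding hausdorff1_def by (rule SUP_mono) (auto intro: hausdorff1_delta_mono)

lemma hausdorff1_singleton [simp]: "hausdorff1 {p} = 0"
proof -
  have "hausdorff1_delta \<delta> {p} \<le> 0" if "\<delta> > 0" for \<delta>
    using hausdorff1_delta_le_cover[of "\<lambda>i. {p}" \<delta> "{p}"] that
    by (simp add: hausdorff1_covers_def)
  then show ?thesis
    using hausdorff1_le_iff[of "{p}" 0] by simp
qed

lemma hausdorff1_empty [simp]: "hausdorff1 ({} :: 'a::metric_space set) = 0"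
  using hausdorff1_mono[of "{}" "{undefined :: 'a}"] by simp

lemma hausdorff1_delta_countably_subadditive:
  "hausdorff1_delta \<delta> (\<Union>n. A n) \<le> (\<Sum>n. hausdorff1_delta \<delta> (A n))"
proof (rule ennreal_le_epsilon)
  fix e :: real assume "0 < e" "(\<Sum>n. hausdorff1_delta \<delta> (A n)) < top"
  then have "hausdorff1_delta \<delta> (A n) < hausdorff1_delta \<delta> (A n) + e * (1/2)^Suc n" for n
    by (auto simp add: less_top dest!: ennreal_suminf_lessD)
  then have "\<forall>n. \<exists>B. B \<in> hausdorff1_covers \<delta> (A n) \<and>
      (\<Sum>i. ennreal (diameter (B i))) < hausdorff1_delta \<delta> (A n) + e * (1/2)^Suc n"
    unfolding hausdorff1_delta_eq_INF INF_less_iff by blast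
  then obtain B where B: "\<And>n. B n \<in> hausdorff1_covers \<delta> (A n)"
    and B_le: "\<And>n. (\<Sum>i. ennreal (diameter (B n i))) \<le> hausdorff1_delta \<delta> (A n) + e * (1/2)^Suc n"
    by (metis less_imp_le)
  define C where "C = case_prod B \<circ> prod_decode"
  have "(\<Union>n. A n) \<subseteq> (\<Union>i. C i)"
  proof
    fix x assume "x \<in> (\<Union>n. A n)"
    then obtain n i where "x \<in> B n i"
      using B by (force simp: hausdorff1_covers_def)
    then have "x \<in> C (prod_encode (n, i))" by (simp add: C_def)
    then show "x \<in> (\<Union>i. C i)" by blast
  qed
  then have C: "C \<in> hausdorff1_covers \<delta> (\<Union>n. A n)"
    using B by (auto simp: hausdorff1_covers_def C_def split: prod.splits)
  have "hausdorff1_delta \<delta> (\<Union>n. A n) \<le> (\<Sum>i. ennreal (diameter (C i)))"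
    by (rule hausdorff1_delta_le_cover[OF C])
  also have "\<dots> = (\<Sum>n. \<Sum>i. ennreal (diameter (B n i)))"
    unfolding C_def comp_def by (intro suminf_ennreal_2dimen) auto
  also have "\<dots> \<le> (\<Sum>n. hausdorff1_delta \<delta> (A n) + e * (1/2) ^ Suc n)"
    by (intro suminf_le B_le) auto
  also have "\<dots> = (\<Sum>n. hausdorff1_delta \<delta> (A n)) + (\<Sum>n. ennreal e * ennreal ((1/2) ^ Suc n))"
    using \<open>0 < e\<close> by (subst suminf_add[symmetric])
      (auto simp del: ennreal_suminf_cmult simp add: ennreal_mult[symmetric])
  also have "\<dots> = (\<Sum>n. hausdorff1_delta \<delta> (A n)) + e"
    unfolding ennreal_suminf_cmult
    by (subst suminf_ennreal_eq[OF zero_le_power power_half_series]) auto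
  finally show "hausdorff1_delta \<delta> (\<Union>n. A n) \<le> (\<Sum>n. hausdorff1_delta \<delta> (A n)) + e" .
qed

lemma hausdorff1_countably_subadditive: "hausdorff1 (\<Union>n. A n) \<le> (\<Sum>n. hausdorff1 (A n))"
  unfolding hausdorff1_le_iff
proof (intro allI impI)
  fix \<delta> :: real assume "\<delta> > 0"
  have "hausdorff1_delta \<delta> (\<Union>n. A n) \<le> (\<Sum>n. hausdorff1_delta \<delta> (A n))"
    by (rule hausdorff1_delta_countably_subadditive)
  also have "\<dots> \<le> (\<Sum>n. hausdorff1 (A n))"
    by (intro suminf_le hausdorff1_delta_le_hausdorff1 \<open>\<delta> > 0\<close>) auto
  finally show "hausdorff1_delta \<delta> (\<Union>n. A n) \<le> (\<Sum>n. hausdorff1 (A n))" .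
qed

text \<open>A cover set of diameter below the separation distance meets at most one of the two sets.\<close>
lemma hausdorff1_delta_separated:
  assumes "0 < \<delta>" "\<delta> < d" and sep: "\<forall>a\<in>A. \<forall>b\<in>B. d \<le> dist a b"
  shows "hausdorff1_delta \<delta> A + hausdorff1_delta \<delta> B \<le> hausdorff1_delta \<delta> (A \<union> B)"
  unfolding hausdorff1_delta_eq_INF[of \<delta> "A \<union> B"]
proof (rule INF_greatest)
  fix C assume C: "C \<in> hausdorff1_covers \<delta> (A \<union> B)"
  define CA where "CA i = (if C i \<inter> A \<noteq> {} then C i else {})" for i
  define CB where "CB i = (if C i \<inter> B \<noteq> {} then C i else {})" for i
  have CA: "CA \<in> hausdorff1_covers \<delta> A"
    using C \<open>0 < \<delta>\<close> by (fastforce simp: hausdorff1_covers_def CA_def)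
  have CB: "CB \<in> hausdorff1_covers \<delta> B"
    using C \<open>0 < \<delta>\<close> by (fastforce simp: hausdorff1_covers_def CB_def)
  have split: "ennreal (diameter (CA i)) + ennreal (diameter (CB i)) \<le> ennreal (diameter (C i))" for i
  proof -
    have C_i: "bounded (C i)" "diameter (C i) \<le> \<delta>"
      using C by (auto simp: hausdorff1_covers_def)
    have "\<not> (C i \<inter> A \<noteq> {} \<and> C i \<inter> B \<noteq> {})"
    proof
      assume "C i \<inter> A \<noteq> {} \<and> C i \<inter> B \<noteq> {}"
      then obtain a b where "a \<in> C i" "a \<in> A" "b \<in> C i" "b \<in> B" by blast
      then have "d \<le> diameter (C i)"
        using sep diameter_bounded_bound[OF C_i(1)] order_trans by blast
      then show False using C_i \<open>\<delta> < d\<close> by linarith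
    qed
    then show ?thesis by (auto simp: CA_def CB_def)
  qed
  have "hausdorff1_delta \<delta> A + hausdorff1_delta \<delta> B
      \<le> (\<Sum>i. ennreal (diameter (CA i))) + (\<Sum>i. ennreal (diameter (CB i)))"
    by (intro add_mono hausdorff1_delta_le_cover CA CB)
  also have "\<dots> = (\<Sum>i. ennreal (diameter (CA i)) + ennreal (diameter (CB i)))"
    by (rule suminf_add) auto
  also have "\<dots> \<le> (\<Sum>i. ennreal (diameter (C i)))"
    by (intro suminf_le split) auto
  finally show "hausdorff1_delta \<delta> A + hausdorff1_delta \<delta> B \<le> (\<Sum>i. ennreal (diameter (C i)))" .
qed

lemma hausdorff1_separated_superadditive:
  assumes "positively_separated A B"
  shows "hausdorff1 A + hausdorff1 B \<le> hausdorff1 (A \<union> B)"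
proof -
  obtain d where "0 < d" and sep: "\<forall>a\<in>A. \<forall>b\<in>B. d \<le> dist a b"
    using assms by (auto simp: positively_separated_def)
  have "hausdorff1_delta \<delta>1 A + hausdorff1_delta \<delta>2 B \<le> hausdorff1 (A \<union> B)"
    if "\<delta>1 > 0" "\<delta>2 > 0" for \<delta>1 \<delta>2
  proof -
    define \<delta> where "\<delta> = min (min \<delta>1 \<delta>2) (d/2)"
    have \<delta>: "0 < \<delta>" "\<delta> < d" "\<delta> \<le> \<delta>1" "\<delta> \<le> \<delta>2"
      using that \<open>0 < d\<close> by (auto simp: \<delta>_def)
    have "hausdorff1_delta \<delta>1 A + hausdorff1_delta \<delta>2 B \<le> hausdorff1_delta \<delta> A + hausdorff1_delta \<delta> B"
      by (intro add_mono hausdorff1_delta_antimono \<delta>)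
    also have "\<dots> \<le> hausdorff1_delta \<delta> (A \<union> B)"
      by (rule hausdorff1_delta_separated[OF \<delta>(1,2) sep])
    also have "\<dots> \<le> hausdorff1 (A \<union> B)"
      by (rule hausdorff1_delta_le_hausdorff1[OF \<delta>(1)])
    finally show ?thesis .
  qed
  moreover have ne: "{0::real<..} \<noteq> {}" by auto
  ultimately show ?thesis
    unfolding hausdorff1_def[of A] hausdorff1_def[of B] ennreal_SUP_add_left[OF ne, symmetric]
    by (auto intro!: SUP_least simp: ennreal_SUP_add_right[OF ne])
qed

interpretation hausdorff1: metric_outer_measure hausdorff1
  by unfold_locales
    (simp_all add: hausdorff1_mono hausdorff1_countably_subadditive hausdorff1_separated_superadditive)

lemma sets_hausdorff1_restr [simp]: "sets (hausdorff1_restr S) = sets borel"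
  unfolding hausdorff1_restr_def
  using sets_measure_of[of "sets borel" UNIV] sets.sigma_sets_eq[of borel] by simp

lemma space_hausdorff1_restr [simp]: "space (hausdorff1_restr S) = UNIV"
  using sets_eq_imp_space_eq[OF sets_hausdorff1_restr[of S]] by simp

text \<open>\<open>measure_of\<close> discards set functions that are not measures, so this identity rests on
  Caratheodory's criterion \<open>closed_split\<close>.\<close>
lemma emeasure_hausdorff1_restr:
  assumes "A \<in> sets borel"
  shows "emeasure (hausdorff1_restr S) A = hausdorff1 (A \<inter> S)"
  unfolding hausdorff1_restr_def
  using metric_outer_measure.measure_space_borel[OF hausdorff1.restrict[of S]] assms
  by (intro emeasure_measure_of_sigma) (auto simp: measure_space_def)

lemma hausdorff1_Diff_singleton [simp]: "hausdorff1 (X - {p}) = hausdorff1 X"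
proof (rule antisym)
  show "hausdorff1 (X - {p}) \<le> hausdorff1 X"
    by (rule hausdorff1_mono) blast
  have "hausdorff1 X \<le> hausdorff1 ((X - {p}) \<union> {p})"
    by (rule hausdorff1_mono) blast
  then show "hausdorff1 X \<le> hausdorff1 (X - {p})"
    using hausdorff1.subadditive[of "X - {p}" "{p}"] by simp
qed

lemma diameter_lipschitz_image_le:
  fixes g :: "'a::metric_space \<Rightarrow> 'b::metric_space"
  assumes g: "M-lipschitz_on A g" and C: "bounded C"
  shows "bounded (g ` (C \<inter> A))" "diameter (g ` (C \<inter> A)) \<le> M * diameter C"
proof -
  have M: "0 \<le> M" by (rule lipschitz_on_nonneg[OF g])
  have d: "dist (g x) (g y) \<le> M * diameter C" if "x \<in> C \<inter> A" "y \<in> C \<inter> A" for x y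
  proof -
    have "dist (g x) (g y) \<le> M * dist x y"
      using that by (intro lipschitz_onD[OF g]) auto
    also have "\<dots> \<le> M * diameter C"
      using that diameter_bounded_bound[OF C] M by (intro mult_left_mono) auto
    finally show ?thesis .
  qed
  then show "bounded (g ` (C \<inter> A))"
    unfolding bounded_two_points by blast
  show "diameter (g ` (C \<inter> A)) \<le> M * diameter C"
    unfolding diameter_def[of "g ` (C \<inter> A)"]
    using d M diameter_ge_0[OF C] by (auto intro!: cSUP_least)
qed

lemma hausdorff1_delta_image_le_cover:
  fixes g :: "'a::metric_space \<Rightarrow> 'b::metric_space"
  assumes g: "M-lipschitz_on A g" and C: "C \<in> hausdorff1_covers \<delta> A"
  shows "hausdorff1_delta (M * \<delta>) (g ` A) \<le> ennreal M * (\<Sum>i. ennreal (diameter (C i)))"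
proof -
  define C' where "C' i = g ` (C i \<inter> A)" for i
  have M: "0 \<le> M" by (rule lipschitz_on_nonneg[OF g])
  have C_i: "bounded (C i)" "diameter (C i) \<le> \<delta>" for i
    using C by (auto simp: hausdorff1_covers_def)
  note C'_i = diameter_lipschitz_image_le[OF g C_i(1), folded C'_def]
  have "diameter (C' i) \<le> M * \<delta>" for i
    using C'_i(2) mult_left_mono[OF C_i(2) M] order_trans by blast
  moreover have "g ` A \<subseteq> (\<Union>i. C' i)"
    using C unfolding hausdorff1_covers_def C'_def by blast
  ultimately have "C' \<in> hausdorff1_covers (M * \<delta>) (g ` A)"
    using C'_i(1) by (simp add: hausdorff1_covers_def)
  then have "hausdorff1_delta (M * \<delta>) (g ` A) \<le> (\<Sum>i. ennreal (diameter (C' i)))"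
    by (rule hausdorff1_delta_le_cover)
  also have "\<dots> \<le> (\<Sum>i. ennreal M * ennreal (diameter (C i)))"
    using C'_i(2) M diameter_ge_0[OF C_i(1)]
    by (intro suminf_le) (simp_all add: ennreal_leI flip: ennreal_mult)
  also have "\<dots> = ennreal M * (\<Sum>i. ennreal (diameter (C i)))"
    by (rule ennreal_suminf_cmult)
  finally show ?thesis .
qed

lemma hausdorff1_delta_lipschitz_image_le:
  fixes g :: "'a::metric_space \<Rightarrow> 'b::metric_space"
  assumes g: "M-lipschitz_on A g" and M: "0 < M"
  shows "hausdorff1_delta (M * \<delta>) (g ` A) \<le> ennreal M * hausdorff1_delta \<delta> A"
proof -
  have M_inv: "ennreal (1/M) * ennreal M = 1"
    using M by (simp flip: ennreal_mult)
  have "ennreal (1/M) * hausdorff1_delta (M * \<delta>) (g ` A) \<le> hausdorff1_delta \<delta> A"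
    unfolding hausdorff1_delta_eq_INF[of \<delta> A]
  proof (rule INF_greatest)
    fix C assume "C \<in> hausdorff1_covers \<delta> A"
    then have "ennreal (1/M) * hausdorff1_delta (M * \<delta>) (g ` A)
        \<le> ennreal (1/M) * (ennreal M * (\<Sum>i. ennreal (diameter (C i))))"
      by (intro mult_left_mono hausdorff1_delta_image_le_cover[OF g]) simp_all
    then show "ennreal (1/M) * hausdorff1_delta (M * \<delta>) (g ` A) \<le> (\<Sum>i. ennreal (diameter (C i)))"
      by (simp add: mult.assoc[symmetric] M_inv)
  qed
  then have "ennreal M * (ennreal (1/M) * hausdorff1_delta (M * \<delta>) (g ` A)) \<le> ennreal M * hausdorff1_delta \<delta> A"
    by (rule mult_left_mono) simp
  then show ?thesis
    by (simp add: mult.assoc[symmetric] M_inv mult.commute[of "ennreal M"])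
qed

lemma hausdorff1_lipschitz_image_le:
  fixes g :: "'a::metric_space \<Rightarrow> 'b::metric_space"
  assumes g: "M-lipschitz_on A g"
  shows "hausdorff1 (g ` A) \<le> ennreal M * hausdorff1 A"
proof (cases "M = 0")
  case True
  show ?thesis
  proof (cases "A = {}")
    case False
    then obtain a where "a \<in> A" by blast
    have "dist (g x) (g a) \<le> 0" if "x \<in> A" for x
      using lipschitz_onD[OF g that \<open>a \<in> A\<close>] True by simp
    then have "hausdorff1 (g ` A) \<le> hausdorff1 {g a}"
      by (intro hausdorff1_mono) auto
    then show ?thesis by simp
  qed simp
next
  case False
  then have M: "0 < M" using lipschitz_on_nonneg[OF g] by simp
  show ?thesis
    unfolding hausdorff1_le_iff
  proof (intro allI impI)
    fix \<delta>' :: real assume "\<delta>' > 0"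
    then have "hausdorff1_delta (M * (\<delta>' / M)) (g ` A) \<le> ennreal M * hausdorff1 A"
      using M by (intro order_trans[OF hausdorff1_delta_lipschitz_image_le[OF g M]] mult_left_mono
          hausdorff1_delta_le_hausdorff1) simp_all
    then show "hausdorff1_delta \<delta>' (g ` A) \<le> ennreal M * hausdorff1 A"
      using M by simp
  qed
qed

lemma uniform_cell_locate:
  fixes w :: real
  assumes w: "0 < w" and x: "a \<le> x" "x < a + real n * w"
  shows "\<exists>j<n. a + real j * w \<le> x \<and> x < a + real j * w + w"
proof -
  define j where "j = nat \<lfloor>(x - a) / w\<rfloor>"
  have "0 \<le> (x - a) / w" using x w by simp
  then have j: "real j \<le> (x - a) / w" "(x - a) / w < real j + 1"
    by (simp_all add: j_def)
  then have "real j * w \<le> x - a" "x - a < (real j + 1) * w"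
    using w by (simp_all add: pos_le_divide_eq pos_divide_less_eq)
  moreover from this have "real j * w < real n * w"
    using x by linarith
  then have "j < n"
    using w by simp
  ultimately show ?thesis by (auto simp: algebra_simps)
qed

lemma cSup_minus_cInf_le_diameter:
  fixes C :: "real set"
  assumes "bounded C" "C \<noteq> {}"
  shows "Sup C - Inf C \<le> diameter C"
proof -
  have "Sup C \<le> diameter C + Inf C"
  proof (rule cSup_least[OF assms(2)])
    fix x assume x: "x \<in> C"
    have "x - diameter C \<le> Inf C"
    proof (rule cInf_greatest[OF assms(2)])
      fix y assume "y \<in> C"
      then show "x - diameter C \<le> y"
        using diameter_bounded_bound[OF assms(1) x, of y] by (simp add: dist_real_def abs_le_iff)
    qed
    then show "x \<le> diameter C + Inf C" by simp
  qed
  then show ?thesis by simp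
qed

text \<open>Every cover set lies in an interval of the same diameter, so the Lebesgue measure of
  \<open>[a, b]\<close> bounds every cover sum from below.\<close>
lemma hausdorff1_Icc_ge: "ennreal (b - a) \<le> hausdorff1 {a..b :: real}"
proof -
  have "ennreal (b - a) \<le> hausdorff1_delta 1 {a..b}"
    unfolding hausdorff1_delta_eq_INF
  proof (rule INF_greatest)
    fix C assume C: "C \<in> hausdorff1_covers 1 {a..b}"
    define I where "I i = (if C i = {} then {} else {Inf (C i) .. Sup (C i)})" for i
    have C_i: "bounded (C i)" for i
      using C by (auto simp: hausdorff1_covers_def)
    have "C i \<subseteq> I i" for i
      using cInf_lower[OF _ bounded_imp_bdd_below[OF C_i]] cSup_upper[OF _ bounded_imp_bdd_above[OF C_i]]
      by (auto simp: I_def)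
    then have "{a..b} \<subseteq> (\<Union>i. I i)"
      using C unfolding hausdorff1_covers_def by blast
    have I_le: "emeasure lborel (I i) \<le> ennreal (diameter (C i))" for i
      using cSup_minus_cInf_le_diameter[OF C_i] by (simp add: I_def emeasure_lborel_Icc_eq ennreal_leI)
    have "ennreal (b - a) \<le> emeasure lborel {a..b}"
      by (simp add: emeasure_lborel_Icc_eq)
    also have "\<dots> \<le> emeasure lborel (\<Union>i. I i)"
      using \<open>{a..b} \<subseteq> _\<close> by (intro emeasure_mono) (auto simp: I_def)
    also have "\<dots> \<le> (\<Sum>i. emeasure lborel (I i))"
      by (rule emeasure_subadditive_countably) (auto simp: I_def)
    also have "\<dots> \<le> (\<Sum>i. ennreal (diameter (C i)))"
      by (intro suminf_le I_le) auto
    finally show "ennreal (b - a) \<le> (\<Sum>i. ennreal (diameter (C i)))" .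
  qed
  also have "\<dots> \<le> hausdorff1 {a..b}"
    by (rule hausdorff1_delta_le_hausdorff1) simp
  finally show ?thesis .
qed

lemma hausdorff1_Icc_le:
  assumes "a < b"
  shows "hausdorff1 {a..b :: real} \<le> ennreal (b - a)"
  unfolding hausdorff1_le_iff
proof (intro allI impI)
  fix \<delta> :: real assume "\<delta> > 0"
  obtain n :: nat where n: "(b - a) / \<delta> < n"
    using reals_Archimedean2 by blast
  then have "n > 0" using assms \<open>\<delta> > 0\<close> by (cases n) (auto simp: field_simps)
  define w where "w = (b - a) / n"
  have w: "w > 0" "w \<le> \<delta>" "b = a + real n * w"
    using n \<open>n > 0\<close> assms \<open>\<delta> > 0\<close> by (auto simp: w_def field_simps)
  define C where "C i = (if i < n then {a + real i * w .. a + real i * w + w} else {})" for i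
  have "{a..b} \<subseteq> (\<Union>i. C i)"
  proof
    fix x assume x: "x \<in> {a..b}"
    show "x \<in> (\<Union>i. C i)"
    proof (cases "x = b")
      case True
      have "real (n - 1) * w + w = real n * w"
        using \<open>n > 0\<close> by (simp add: of_nat_diff algebra_simps)
      then have "x \<in> C (n - 1)"
        using True w \<open>n > 0\<close> by (simp add: C_def)
      then show ?thesis by blast
    next
      case False
      then obtain j where "j < n" "a + real j * w \<le> x" "x < a + real j * w + w"
        using uniform_cell_locate[OF w(1), of a x n] x w(3) by auto
      then have "x \<in> C j" by (simp add: C_def)
      then show ?thesis by blast
    qed
  qed
  then have "C \<in> hausdorff1_covers \<delta> {a..b}"
    using w by (auto simp: hausdorff1_covers_def C_def)
  then have "hausdorff1_delta \<delta> {a..b} \<le> (\<Sum>i. ennreal (diameter (C i)))"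
    by (rule hausdorff1_delta_le_cover)
  also have "\<dots> = (\<Sum>i<n. ennreal w)"
    using w by (subst suminf_finite[of "{..<n}"]) (auto simp: C_def intro!: sum.cong)
  also have "\<dots> = ennreal (b - a)"
    using w by (simp add: ennreal_of_nat_eq_real_of_nat flip: ennreal_mult)
  finally show "hausdorff1_delta \<delta> {a..b} \<le> ennreal (b - a)" .
qed

lemma hausdorff1_Icc: "hausdorff1 {a..b :: real} = ennreal (b - a)"
proof (cases "a < b")
  case True
  then show ?thesis
    by (intro antisym hausdorff1_Icc_le hausdorff1_Icc_ge)
next
  case False
  have "hausdorff1 {a..b} \<le> hausdorff1 {a}"
    using False by (intro hausdorff1_mono) auto
  then show ?thesis
    using False by (simp add: ennreal_eq_0_iff)
qed

text \<open>Distance to \<open>p\<close> is 1-Lipschitz, and it maps the connected set onto an interval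
  containing \<open>[0, dist p q]\<close>.\<close>
lemma hausdorff1_connected_ge_dist:
  fixes K :: "'a::metric_space set"
  assumes "connected K" "p \<in> K" "q \<in> K"
  shows "ennreal (dist p q) \<le> hausdorff1 K"
proof -
  have lip: "1-lipschitz_on K (dist p)"
  proof (rule lipschitz_onI)
    show "dist (dist p x) (dist p y) \<le> 1 * dist x y" for x y
      using abs_dist_diff_le[of x p y] by (simp add: dist_real_def dist_commute)
  qed simp
  have "connected (dist p ` K)"
    by (intro connected_continuous_image[OF _ assms(1)] continuous_intros)
  moreover have "0 \<in> dist p ` K" "dist p q \<in> dist p ` K"
    using assms(2,3) by (auto intro: image_eqI[where x = p])
  ultimately have "{0..dist p q} \<subseteq> dist p ` K"
    by (rule connected_contains_Icc)
  then have "ennreal (dist p q) \<le> hausdorff1 (dist p ` K)"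
    using hausdorff1_mono[of "{0..dist p q}"] by (simp add: hausdorff1_Icc)
  also have "\<dots> \<le> hausdorff1 K"
    using hausdorff1_lipschitz_image_le[OF lip] by simp
  finally show ?thesis .
qed

section \<open>Length of graphs\<close>

lemma graph_on_eq_image: "graph_on a b f = (\<lambda>x. (x, f x)) ` {a..b}"
  by (auto simp: graph_on_def)

lemma graph_on_cong: "(\<And>x. x \<in> {a..b} \<Longrightarrow> f x = g x) \<Longrightarrow> graph_on a b f = graph_on a b g"
  by (auto simp: graph_on_def)

lemma hausdorff1_graph_split:
  assumes "a \<le> m" "m \<le> b"
  shows "hausdorff1 (graph_on a b f) = hausdorff1 (graph_on a m f) + hausdorff1 (graph_on m b f)"
proof -
  have "closed {z :: real \<times> real. fst z \<le> m}"
    by (intro closed_Collect_le continuous_intros)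
  moreover have "graph_on a b f \<inter> {z. fst z \<le> m} = graph_on a m f"
    using assms by (auto simp: graph_on_def)
  moreover have "graph_on a b f - {z. fst z \<le> m} = graph_on m b f - {(m, f m)}"
    using assms by (auto simp: graph_on_def)
  ultimately show ?thesis
    using hausdorff1.closed_split[of "{z. fst z \<le> m}" "graph_on a b f"] by simp
qed

lemma hausdorff1_graph_uniform_cells:
  assumes "0 \<le> w"
  shows "hausdorff1 (graph_on a (a + real n * w) f)
    = (\<Sum>j<n. hausdorff1 (graph_on (a + real j * w) (a + real j * w + w) f))"
proof (induction n)
  case 0
  have "graph_on a a f = {(a, f a)}" by (auto simp: graph_on_def)
  then show ?case by simp
next
  case (Suc n)
  have "a + real (Suc n) * w = a + real n * w + w"
    by (simp add: algebra_simps)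
  moreover have "hausdorff1 (graph_on a (a + real n * w + w) f) =
      hausdorff1 (graph_on a (a + real n * w) f) + hausdorff1 (graph_on (a + real n * w) (a + real n * w + w) f)"
    using assms by (intro hausdorff1_graph_split) auto
  ultimately have "hausdorff1 (graph_on a (a + real (Suc n) * w) f) =
      hausdorff1 (graph_on a (a + real n * w) f) + hausdorff1 (graph_on (a + real n * w) (a + real n * w + w) f)"
    by metis
  then show ?case using Suc by simp
qed

lemma hausdorff1_graph_le:
  assumes "L-lipschitz_on {a..b} f"
  shows "hausdorff1 (graph_on a b f) \<le> ennreal (sqrt (1 + L\<^sup>2) * (b - a))"
proof -
  have "(sqrt (1\<^sup>2 + L\<^sup>2))-lipschitz_on {a..b} (\<lambda>x. (x, f x))"
    by (intro lipschitz_on_Pair lipschitz_on_id assms)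
  then have "hausdorff1 (graph_on a b f) \<le> ennreal (sqrt (1 + L\<^sup>2)) * hausdorff1 {a..b}"
    unfolding graph_on_eq_image using hausdorff1_lipschitz_image_le by fastforce
  then show ?thesis
    by (simp add: hausdorff1_Icc ennreal_mult')
qed

lemma hausdorff1_graph_finite: "L-lipschitz_on {a..b} f \<Longrightarrow> hausdorff1 (graph_on a b f) < \<infinity>"
  using hausdorff1_graph_le le_less_trans by (metis ennreal_less_top infinity_ennreal_def)

lemma hausdorff1_graph_ge_dist:
  assumes "continuous_on {a..b} f" "a \<le> b"
  shows "ennreal (dist (a, f a) (b, f b)) \<le> hausdorff1 (graph_on a b f)"
proof -
  have "connected ((\<lambda>x. (x, f x)) ` {a..b})"
    by (intro connected_continuous_image continuous_on_Pair continuous_on_id assms(1)) simp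
  then show ?thesis
    unfolding graph_on_eq_image using assms(2) by (intro hausdorff1_connected_ge_dist) auto
qed

lemma hausdorff1_graph_add_lipschitz_le:
  assumes T: "K-lipschitz_on {a..b} T"
  shows "hausdorff1 (graph_on a b (\<lambda>x. f x + c * T x))
    \<le> ennreal (1 + \<bar>c\<bar> * K) * hausdorff1 (graph_on a b f)"
proof -
  have K: "0 \<le> K" by (rule lipschitz_on_nonneg[OF T])
  define \<Phi> :: "real \<times> real \<Rightarrow> real \<times> real" where "\<Phi> z = (fst z, snd z + c * T (fst z))" for z
  have "(1 + \<bar>c\<bar> * K)-lipschitz_on (graph_on a b f) \<Phi>"
  proof (rule lipschitz_onI)
    fix p q assume "p \<in> graph_on a b f" "q \<in> graph_on a b f"
    then obtain x y where xy: "x \<in> {a..b}" "y \<in> {a..b}" "p = (x, f x)" "q = (y, f y)"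
      by (auto simp: graph_on_def)
    have "\<Phi> p - \<Phi> q = (p - q) + (0, c * (T x - T y))"
      using xy by (simp add: \<Phi>_def algebra_simps)
    then have "dist (\<Phi> p) (\<Phi> q) \<le> dist p q + \<bar>c\<bar> * dist (T x) (T y)"
      unfolding dist_norm using norm_triangle_ineq[of "p - q" "(0, c * (T x - T y))"]
      by (simp add: norm_Pair dist_real_def abs_mult)
    also have "\<bar>c\<bar> * dist (T x) (T y) \<le> \<bar>c\<bar> * (K * dist p q)"
      using lipschitz_onD[OF T xy(1,2)] dist_fst_le[of p q] xy K
      by (intro mult_left_mono) (auto intro: order_trans mult_left_mono)
    finally show "dist (\<Phi> p) (\<Phi> q) \<le> (1 + \<bar>c\<bar> * K) * dist p q"
      by (simp add: algebra_simps)
  qed (use K in simp)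
  moreover have "graph_on a b (\<lambda>x. f x + c * T x) = \<Phi> ` graph_on a b f"
    by (auto simp: graph_on_def \<Phi>_def image_iff)
  ultimately show ?thesis
    using hausdorff1_lipschitz_image_le by metis
qed

section \<open>Adding tents\<close>

definition tent :: "real \<Rightarrow> real \<Rightarrow> real \<Rightarrow> real" where
  "tent a w x = max 0 (1 - \<bar>x - (a + w/2)\<bar> * (2 / w))"

lemma tent_nonneg: "0 \<le> tent a w x"
  by (simp add: tent_def)

lemma tent_le_1: "0 < w \<Longrightarrow> tent a w x \<le> 1"
  by (simp add: tent_def)

lemma tent_midpoint: "0 < w \<Longrightarrow> tent a w (a + w/2) = 1"
  by (simp add: tent_def)

lemma tent_eq_0:
  assumes "0 < w" "x \<le> a \<or> a + w \<le> x"
  shows "tent a w x = 0"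
proof -
  have "w / 2 * (2 / w) \<le> \<bar>x - (a + w/2)\<bar> * (2 / w)"
    using assms by (intro mult_right_mono) auto
  then show ?thesis
    using assms by (simp add: tent_def)
qed

lemma lipschitz_on_tent: "0 < w \<Longrightarrow> (2 / w)-lipschitz_on X (tent a w)"
proof (rule lipschitz_onI)
  fix x y assume "0 < w"
  define m where "m = a + w/2"
  have "dist (tent a w x) (tent a w y) \<le> \<bar>(1 - \<bar>x - m\<bar> * (2 / w)) - (1 - \<bar>y - m\<bar> * (2 / w))\<bar>"
    unfolding tent_def dist_real_def m_def by (auto simp: max_def)
  also have "(1 - \<bar>x - m\<bar> * (2 / w)) - (1 - \<bar>y - m\<bar> * (2 / w)) = (\<bar>y - m\<bar> - \<bar>x - m\<bar>) * (2 / w)"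
    by algebra
  also have "\<bar>(\<bar>y - m\<bar> - \<bar>x - m\<bar>) * (2 / w)\<bar> = \<bar>\<bar>y - m\<bar> - \<bar>x - m\<bar>\<bar> * (2 / w)"
    using \<open>0 < w\<close> by (simp only: abs_mult) simp
  also have "\<dots> \<le> \<bar>x - y\<bar> * (2 / w)"
    using \<open>0 < w\<close> by (intro mult_right_mono) auto
  finally show "dist (tent a w x) (tent a w y) \<le> 2 / w * dist x y"
    by (simp add: dist_real_def mult.commute)
qed simp

lemma enn2real_hausdorff1_graph_add_lipschitz_le:
  fixes h T :: "real \<Rightarrow> real"
  assumes h: "L-lipschitz_on {a..b} h" and T: "K-lipschitz_on {a..b} T"
  shows "enn2real (hausdorff1 (graph_on a b (\<lambda>x. h x + s * T x)))
    \<le> (1 + \<bar>s - t\<bar> * K) * enn2real (hausdorff1 (graph_on a b (\<lambda>x. h x + t * T x)))"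
proof -
  have K: "0 \<le> K" by (rule lipschitz_on_nonneg[OF T])
  have H: "hausdorff1 (graph_on a b (\<lambda>x. h x + t * T x)) = ennreal (enn2real (hausdorff1 (graph_on a b (\<lambda>x. h x + t * T x))))"
    for t
    using hausdorff1_graph_finite[OF lipschitz_on_add[OF h lipschitz_on_cmult_real[OF T, of t]]]
    by (simp add: ennreal_enn2real_if less_top)
  have "(\<lambda>x. h x + s * T x) = (\<lambda>x. (h x + t * T x) + (s - t) * T x)"
    by (simp add: algebra_simps)
  then have "hausdorff1 (graph_on a b (\<lambda>x. h x + s * T x))
      \<le> ennreal (1 + \<bar>s - t\<bar> * K) * hausdorff1 (graph_on a b (\<lambda>x. h x + t * T x))"
    using hausdorff1_graph_add_lipschitz_le[OF T, of "\<lambda>x. h x + t * T x" "s - t"] by simp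
  also have "\<dots> = ennreal ((1 + \<bar>s - t\<bar> * K) * enn2real (hausdorff1 (graph_on a b (\<lambda>x. h x + t * T x))))"
    using K by (subst H) (simp add: ennreal_mult)
  finally show ?thesis
    using K by (subst (asm) H) (simp add: ennreal_le_iff)
qed

lemma continuous_on_hausdorff1_graph_family:
  fixes h T :: "real \<Rightarrow> real"
  assumes h: "L-lipschitz_on {a..b} h" and T: "K-lipschitz_on {a..b} T" and "a \<le> b"
  shows "continuous_on {0..1} (\<lambda>t. enn2real (hausdorff1 (graph_on a b (\<lambda>x. h x + t * T x))))"
proof -
  define \<psi> where "\<psi> t = enn2real (hausdorff1 (graph_on a b (\<lambda>x. h x + t * T x)))" for t
  define B where "B = sqrt (1 + (L + K)\<^sup>2) * (b - a)"
  have K: "0 \<le> K" by (rule lipschitz_on_nonneg[OF T])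
  have \<psi>_le: "\<psi> t \<le> B" if "t \<in> {0..1}" for t
  proof -
    have lip: "(L + \<bar>t\<bar> * K)-lipschitz_on {a..b} (\<lambda>x. h x + t * T x)"
      by (intro lipschitz_on_add h lipschitz_on_cmult_real T)
    have "(L + K)-lipschitz_on {a..b} (\<lambda>x. h x + t * T x)"
      using that K by (intro lipschitz_on_mono[OF lip]) (auto intro: mult_left_le_one_le)
    then have "hausdorff1 (graph_on a b (\<lambda>x. h x + t * T x)) \<le> ennreal B"
      unfolding B_def by (rule hausdorff1_graph_le)
    moreover have "0 \<le> B" using \<open>a \<le> b\<close> by (simp add: B_def)
    ultimately show ?thesis
      unfolding \<psi>_def by (simp add: enn2real_leI)
  qed
  have \<psi>_step: "\<psi> s \<le> \<psi> t + \<bar>s - t\<bar> * (K * B)" if "t \<in> {0..1}" for s t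
  proof -
    have "\<psi> s \<le> (1 + \<bar>s - t\<bar> * K) * \<psi> t"
      unfolding \<psi>_def by (rule enn2real_hausdorff1_graph_add_lipschitz_le[OF h T])
    also have "\<dots> \<le> \<psi> t + \<bar>s - t\<bar> * (K * B)"
      using mult_left_mono[OF \<psi>_le[OF that], of "\<bar>s - t\<bar> * K"] K by (simp add: algebra_simps)
    finally show ?thesis .
  qed
  have "(K * B)-lipschitz_on {0..1} \<psi>"
  proof (rule lipschitz_onI)
    show "dist (\<psi> s) (\<psi> t) \<le> K * B * dist s t" if "s \<in> {0..1}" "t \<in> {0..1}" for s t
      using \<psi>_step[OF that(2), of s] \<psi>_step[OF that(1), of t]
      by (simp add: dist_real_def abs_minus_commute abs_le_iff algebra_simps)
    show "0 \<le> K * B"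
      using K \<open>a \<le> b\<close> by (simp add: B_def)
  qed
  then show ?thesis
    unfolding \<psi>_def by (rule lipschitz_on_continuous_on)
qed

text \<open>The graph passes through the apex \<open>(a + w/2, h (a + w/2) + \<eta>)\<close>; compare with the two chords
  from the end points to the apex.\<close>
lemma hausdorff1_graph_tent_ge:
  assumes w: "0 < w" and h: "L-lipschitz_on {a..a+w} h"
  shows "ennreal (2 * \<eta> - L * w) \<le> hausdorff1 (graph_on a (a+w) (\<lambda>x. h x + \<eta> * tent a w x))"
proof -
  define g where "g x = h x + \<eta> * tent a w x" for x
  define m where "m = a + w/2"
  have g: "g a = h a" "g m = h m + \<eta>" "g (a+w) = h (a+w)"
    using w by (simp_all add: g_def m_def tent_eq_0 tent_midpoint)
  have "(L + \<bar>\<eta>\<bar> * (2 / w))-lipschitz_on {a..a+w} g"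
    unfolding g_def using w by (intro lipschitz_on_add h lipschitz_on_cmult_real lipschitz_on_tent)
  then have cont: "continuous_on {a..a+w} g"
    by (rule lipschitz_on_continuous_on)
  have "\<bar>h m - h a\<bar> \<le> L * (w/2)" "\<bar>h (a+w) - h m\<bar> \<le> L * (w/2)"
    using lipschitz_onD[OF h, of m a] lipschitz_onD[OF h, of "a+w" m] w
    by (simp_all add: m_def dist_real_def)
  moreover have "\<bar>g a - g m\<bar> \<le> dist (a, g a) (m, g m)" "\<bar>g m - g (a+w)\<bar> \<le> dist (m, g m) (a+w, g (a+w))"
    using dist_snd_le[of "(a, g a)" "(m, g m)"] dist_snd_le[of "(m, g m)" "(a+w, g (a+w))"]
    by (simp_all add: dist_real_def)
  ultimately have "2 * \<eta> - L * w \<le> dist (a, g a) (m, g m) + dist (m, g m) (a+w, g (a+w))"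
    unfolding g by linarith
  then have "ennreal (2 * \<eta> - L * w) \<le> ennreal (dist (a, g a) (m, g m)) + ennreal (dist (m, g m) (a+w, g (a+w)))"
    by (simp add: ennreal_leI flip: ennreal_plus)
  also have "\<dots> \<le> hausdorff1 (graph_on a m g) + hausdorff1 (graph_on m (a+w) g)"
    using w by (intro add_mono hausdorff1_graph_ge_dist continuous_on_subset[OF cont]) (auto simp: m_def)
  also have "\<dots> = hausdorff1 (graph_on a (a+w) g)"
    using w by (intro hausdorff1_graph_split[symmetric]) (auto simp: m_def)
  finally show ?thesis unfolding g_def .
qed

text \<open>Raising the tent from height 0 to height \<open>\<eta>\<close> moves the length continuously from \<open>\<ell>\<close>
  to at least \<open>2\<eta> - L w \<ge> r \<ell>\<close>, so some intermediate height gives exactly \<open>r \<ell>\<close>.\<close>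
lemma exists_tent_height_scaling:
  assumes w: "0 < w" and h: "L-lipschitz_on {a..a+w} h" and "0 < \<eta>" "1 \<le> r"
    and small: "(L + r * sqrt (1 + L\<^sup>2)) * w \<le> 2 * \<eta>"
  shows "\<exists>t\<in>{0..1}. hausdorff1 (graph_on a (a+w) (\<lambda>x. h x + t * (\<eta> * tent a w x)))
    = ennreal r * hausdorff1 (graph_on a (a+w) h)"
proof -
  define \<psi> where "\<psi> t = enn2real (hausdorff1 (graph_on a (a+w) (\<lambda>x. h x + t * (\<eta> * tent a w x))))" for t
  have T: "(\<bar>\<eta>\<bar> * (2 / w))-lipschitz_on {a..a+w} (\<lambda>x. \<eta> * tent a w x)"
    using w by (intro lipschitz_on_cmult_real lipschitz_on_tent)
  have H: "hausdorff1 (graph_on a (a+w) (\<lambda>x. h x + t * (\<eta> * tent a w x))) = ennreal (\<psi> t)" for t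
    unfolding \<psi>_def
    using hausdorff1_graph_finite[OF lipschitz_on_add[OF h lipschitz_on_cmult_real[OF T, of t]]]
    by (simp add: ennreal_enn2real_if less_top)
  have \<psi>_nonneg: "0 \<le> \<psi> t" for t
    by (simp add: \<psi>_def)
  have "continuous_on {0..1} \<psi>"
    unfolding \<psi>_def using w by (intro continuous_on_hausdorff1_graph_family[OF h T]) simp
  moreover have "\<psi> 0 \<le> r * \<psi> 0"
    using mult_right_mono[OF \<open>1 \<le> r\<close>, of "\<psi> 0"] by (simp add: \<psi>_def)
  moreover have "r * \<psi> 0 \<le> \<psi> 1"
  proof -
    have "ennreal (\<psi> 0) \<le> ennreal (sqrt (1 + L\<^sup>2) * w)"
      using hausdorff1_graph_le[OF h] H[of 0] by simp
    then have "r * \<psi> 0 \<le> r * (sqrt (1 + L\<^sup>2) * w)"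
      using \<open>1 \<le> r\<close> w by (simp add: ennreal_le_iff)
    also have "\<dots> \<le> 2 * \<eta> - L * w"
      using small by (simp add: algebra_simps)
    also have "\<dots> \<le> \<psi> 1"
      using hausdorff1_graph_tent_ge[OF w h, of \<eta>] H[of 1] \<psi>_nonneg[of 1] by (auto simp: ennreal_le_iff2)
    finally show ?thesis .
  qed
  ultimately obtain t where "t \<in> {0..1}" "\<psi> t = r * \<psi> 0"
    using IVT'[of \<psi> 0 "r * \<psi> 0" 1] by auto
  moreover have "ennreal (r * \<psi> 0) = ennreal r * hausdorff1 (graph_on a (a+w) h)"
    using H[of 0] \<open>1 \<le> r\<close> \<psi>_nonneg[of 0] by (simp add: ennreal_mult)
  ultimately show ?thesis
    using H by metis
qed

lemma uniform_cells_ordered: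
  fixes w :: real
  assumes "0 < w" "i < j"
  shows "a + real i * w + w \<le> a + real j * w"
proof -
  have "(real i + 1) * w \<le> real j * w"
    using assms by (intro mult_right_mono) auto
  then show ?thesis by (simp add: algebra_simps)
qed

lemma tent_sum_on_cell:
  fixes w :: real
  assumes w: "0 < w" and "j < n" and x: "a + real j * w \<le> x" "x \<le> a + real j * w + w"
  shows "(\<Sum>i<n. c i * tent (a + real i * w) w x) = c j * tent (a + real j * w) w x"
proof -
  have "tent (a + real i * w) w x = 0" if "i \<noteq> j" for i
  proof (cases "i < j")
    case True
    then show ?thesis
      using uniform_cells_ordered[OF w True, of a] x by (intro tent_eq_0 w) auto
  next
    case False
    then have "j < i" using that by simp
    then show ?thesis
      using uniform_cells_ordered[OF w \<open>j < i\<close>, of a] x by (intro tent_eq_0 w) auto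
  qed
  then have "(\<Sum>i<n. c i * tent (a + real i * w) w x)
      = (\<Sum>i<n. if i = j then c j * tent (a + real j * w) w x else 0)"
    by (intro sum.cong) auto
  then show ?thesis
    using \<open>j < n\<close> by simp
qed

lemma tent_sum_outside:
  fixes w :: real
  assumes w: "0 < w" and x: "x \<le> a \<or> a + real n * w \<le> x"
  shows "(\<Sum>i<n. c i * tent (a + real i * w) w x) = 0"
proof (intro sum.neutral ballI)
  fix i assume "i \<in> {..<n}"
  then have "a + real i * w + w \<le> a + real n * w"
    using uniform_cells_ordered[OF w] by simp
  moreover have "a \<le> a + real i * w"
    using w by simp
  ultimately have "x \<le> a + real i * w \<or> a + real i * w + w \<le> x"
    using x by linarith
  then show "c i * tent (a + real i * w) w x = 0"
    by (simp add: tent_eq_0[OF w])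
qed

lemma tent_sum_bounds:
  fixes w :: real
  assumes w: "0 < w" and c: "\<And>i. i < n \<Longrightarrow> c i \<in> {0..1}"
  shows "0 \<le> (\<Sum>i<n. c i * tent (a + real i * w) w x)" "(\<Sum>i<n. c i * tent (a + real i * w) w x) \<le> 1"
proof -
  show "0 \<le> (\<Sum>i<n. c i * tent (a + real i * w) w x)"
    using c by (intro sum_nonneg mult_nonneg_nonneg tent_nonneg) auto
  show "(\<Sum>i<n. c i * tent (a + real i * w) w x) \<le> 1"
  proof (cases "a \<le> x \<and> x < a + real n * w")
    case True
    then obtain j where j: "j < n" "a + real j * w \<le> x" "x < a + real j * w + w"
      using uniform_cell_locate[OF w] by blast
    then have "(\<Sum>i<n. c i * tent (a + real i * w) w x) = c j * tent (a + real j * w) w x"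
      by (intro tent_sum_on_cell w) auto
    also have "\<dots> \<le> 1 * 1"
      using c[OF j(1)] tent_le_1[OF w] tent_nonneg by (intro mult_mono) auto
    finally show ?thesis by simp
  next
    case False
    then have "x \<le> a \<or> a + real n * w \<le> x" by linarith
    then show ?thesis
      using tent_sum_outside[OF w] by simp
  qed
qed

lemma lipschitz_on_sum:
  fixes f :: "'i \<Rightarrow> 'a::metric_space \<Rightarrow> real"
  assumes "finite I" "\<And>i. i \<in> I \<Longrightarrow> (C i)-lipschitz_on U (f i)"
  shows "(\<Sum>i\<in>I. C i)-lipschitz_on U (\<lambda>x. \<Sum>i\<in>I. f i x)"
  using assms
proof (induction I rule: finite_induct)
  case empty
  show ?case using lipschitz_on_constant[of U 0] by simp
next
  case (insert i I)
  then have "(C i + (\<Sum>i\<in>I. C i))-lipschitz_on U (\<lambda>x. f i x + (\<Sum>i\<in>I. f i x))"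
    by (intro lipschitz_on_add) auto
  then show ?case using insert by simp
qed

lemma exists_cellwise_scaled_graph:
  fixes h :: "real \<Rightarrow> real"
  assumes h: "L-lipschitz_on {\<alpha>..\<beta>} h" and w: "0 < w" "\<beta> = \<alpha> + real n * w"
    and "0 < \<eta>" "1 \<le> r" and small: "(L + r * sqrt (1 + L\<^sup>2)) * w \<le> 2 * \<eta>"
  shows "\<exists>g. (\<exists>L'. L'-lipschitz_on {\<alpha>..\<beta>} g) \<and> (\<forall>x\<in>{\<alpha>..\<beta>}. h x \<le> g x \<and> g x \<le> h x + \<eta>) \<and>
    g \<alpha> = h \<alpha> \<and> g \<beta> = h \<beta> \<and>
    (\<forall>j<n. hausdorff1 (graph_on (\<alpha> + real j * w) (\<alpha> + real j * w + w) g)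
      = ennreal r * hausdorff1 (graph_on (\<alpha> + real j * w) (\<alpha> + real j * w + w) h))"
proof -
  define a where "a j = \<alpha> + real j * w" for j
  have ex: "\<forall>j\<in>{..<n}. \<exists>t. t \<in> {0..1} \<and> hausdorff1 (graph_on (a j) (a j + w) (\<lambda>x. h x + t * (\<eta> * tent (a j) w x)))
      = ennreal r * hausdorff1 (graph_on (a j) (a j + w) h)"
  proof
    fix j assume "j \<in> {..<n}"
    then have "{a j..a j + w} \<subseteq> {\<alpha>..\<beta>}"
      using uniform_cells_ordered[OF w(1), of j n \<alpha>] w by (auto simp: a_def)
    then show "\<exists>t. t \<in> {0..1} \<and> hausdorff1 (graph_on (a j) (a j + w) (\<lambda>x. h x + t * (\<eta> * tent (a j) w x)))
        = ennreal r * hausdorff1 (graph_on (a j) (a j + w) h)"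
      using exists_tent_height_scaling[OF w(1) lipschitz_on_subset[OF h] \<open>0 < \<eta>\<close> \<open>1 \<le> r\<close> small] by blast
  qed
  obtain t where t: "\<And>j. j < n \<Longrightarrow> t j \<in> {0..1}"
    and t_scales: "\<And>j. j < n \<Longrightarrow> hausdorff1 (graph_on (a j) (a j + w) (\<lambda>x. h x + t j * (\<eta> * tent (a j) w x)))
      = ennreal r * hausdorff1 (graph_on (a j) (a j + w) h)"
    using bchoice[OF ex] by auto
  define g where "g x = h x + \<eta> * (\<Sum>j<n. t j * tent (a j) w x)" for x
  have "(L + \<bar>\<eta>\<bar> * (\<Sum>j<n. \<bar>t j\<bar> * (2 / w)))-lipschitz_on {\<alpha>..\<beta>} g"
    unfolding g_def using w(1)
    by (intro lipschitz_on_add h lipschitz_on_cmult_real lipschitz_on_sum lipschitz_on_tent) auto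
  moreover have "h x \<le> g x \<and> g x \<le> h x + \<eta>" for x
    using tent_sum_bounds[OF w(1) t, where a = \<alpha> and x = x] mult_left_mono[of _ 1 \<eta>] \<open>0 < \<eta>\<close>
    by (auto simp: g_def a_def)
  moreover have "g \<alpha> = h \<alpha>" "g \<beta> = h \<beta>"
    using tent_sum_outside[OF w(1), where a = \<alpha> and n = n and c = t] w by (simp_all add: g_def a_def)
  moreover have "hausdorff1 (graph_on (a j) (a j + w) g) = ennreal r * hausdorff1 (graph_on (a j) (a j + w) h)"
    if "j < n" for j
  proof -
    have "graph_on (a j) (a j + w) g = graph_on (a j) (a j + w) (\<lambda>x. h x + t j * (\<eta> * tent (a j) w x))"
      using tent_sum_on_cell[OF w(1) that, where a = \<alpha> and c = t] by (intro graph_on_cong) (simp add: g_def a_def)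
    then show ?thesis
      using t_scales[OF that] by simp
  qed
  ultimately show ?thesis
    unfolding a_def by blast
qed

lemma hausdorff1_graph_scaled_if_cellwise:
  fixes w :: real
  assumes "0 \<le> w" "\<beta> = \<alpha> + real n * w"
    and cells: "\<And>j. j < n \<Longrightarrow> hausdorff1 (graph_on (\<alpha> + real j * w) (\<alpha> + real j * w + w) g)
      = c * hausdorff1 (graph_on (\<alpha> + real j * w) (\<alpha> + real j * w + w) h)"
  shows "hausdorff1 (graph_on \<alpha> \<beta> g) = c * hausdorff1 (graph_on \<alpha> \<beta> h)"
  using assms(1) by (simp add: assms(2) hausdorff1_graph_uniform_cells cells sum_distrib_left)

text \<open>The number of cells \<open>n k\<close> grows like \<open>k\<close>, so the cell width is small enough for tents
  of height \<open>1 / (k + 1)\<close>.\<close>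
lemma exists_cellwise_scaled_graph_sequence:
  fixes h :: "real \<Rightarrow> real"
  assumes h: "L-lipschitz_on {\<alpha>..\<beta>} h" and "\<alpha> < \<beta>" "1 \<le> r"
  obtains w :: "nat \<Rightarrow> real" and n :: "nat \<Rightarrow> nat" and hs :: "nat \<Rightarrow> real \<Rightarrow> real"
  where "\<And>k. 0 < w k" "\<And>k. \<beta> = \<alpha> + real (n k) * w k" "w \<longlonglongrightarrow> 0"
    and "\<And>k. \<exists>L'. L'-lipschitz_on {\<alpha>..\<beta>} (hs k)"
    and "\<And>k x. x \<in> {\<alpha>..\<beta>} \<Longrightarrow> h x \<le> hs k x \<and> hs k x \<le> h x + 1 / real (Suc k)"
    and "\<And>k. hs k \<alpha> = h \<alpha> \<and> hs k \<beta> = h \<beta>"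
    and "\<And>k j. j < n k \<Longrightarrow> hausdorff1 (graph_on (\<alpha> + real j * w k) (\<alpha> + real j * w k + w k) (hs k))
      = ennreal r * hausdorff1 (graph_on (\<alpha> + real j * w k) (\<alpha> + real j * w k + w k) h)"
proof -
  define c where "c = (L + r * sqrt (1 + L\<^sup>2)) * (\<beta> - \<alpha>)"
  define N where "N = real (nat \<lceil>c\<rceil> + 1)"
  define n where "n k = Suc k * (nat \<lceil>c\<rceil> + 1)" for k
  define w where "w k = (\<beta> - \<alpha>) / N * (1 / real (Suc k))" for k
  have "c \<le> N" "0 < N"
    by (simp_all add: N_def) linarith
  have w_pos: "0 < w k" for k
    using \<open>\<alpha> < \<beta>\<close> \<open>0 < N\<close> by (simp add: w_def)
  have \<beta>_eq: "\<beta> = \<alpha> + real (n k) * w k" for k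
  proof -
    have "real (n k) = real (Suc k) * N"
      by (simp add: n_def N_def algebra_simps)
    then show ?thesis
      using \<open>0 < N\<close> by (simp add: w_def)
  qed
  have "w \<longlonglongrightarrow> (\<beta> - \<alpha>) / N * 0"
    unfolding w_def by (intro tendsto_mult tendsto_const LIMSEQ_Suc[OF lim_1_over_n])
  then have "w \<longlonglongrightarrow> 0" by simp
  have small: "(L + r * sqrt (1 + L\<^sup>2)) * w k \<le> 2 * (1 / real (Suc k))" for k
  proof -
    have "(L + r * sqrt (1 + L\<^sup>2)) * w k = c / N * (1 / real (Suc k))"
      by (simp add: c_def w_def)
    also have "\<dots> \<le> 2 * (1 / real (Suc k))"
      using \<open>c \<le> N\<close> \<open>0 < N\<close> by (intro mult_right_mono) (simp_all add: divide_le_eq)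
    finally show ?thesis .
  qed
  have "\<forall>k. \<exists>g. (\<exists>L'. L'-lipschitz_on {\<alpha>..\<beta>} g) \<and>
      (\<forall>x\<in>{\<alpha>..\<beta>}. h x \<le> g x \<and> g x \<le> h x + 1 / real (Suc k)) \<and> g \<alpha> = h \<alpha> \<and> g \<beta> = h \<beta> \<and>
      (\<forall>j<n k. hausdorff1 (graph_on (\<alpha> + real j * w k) (\<alpha> + real j * w k + w k) g)
        = ennreal r * hausdorff1 (graph_on (\<alpha> + real j * w k) (\<alpha> + real j * w k + w k) h))"
    using exists_cellwise_scaled_graph[OF h w_pos \<beta>_eq _ \<open>1 \<le> r\<close> small] by simp
  then obtain hs where "\<forall>k. (\<exists>L'. L'-lipschitz_on {\<alpha>..\<beta>} (hs k)) \<and>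
      (\<forall>x\<in>{\<alpha>..\<beta>}. h x \<le> hs k x \<and> hs k x \<le> h x + 1 / real (Suc k)) \<and> hs k \<alpha> = h \<alpha> \<and> hs k \<beta> = h \<beta> \<and>
      (\<forall>j<n k. hausdorff1 (graph_on (\<alpha> + real j * w k) (\<alpha> + real j * w k + w k) (hs k))
        = ennreal r * hausdorff1 (graph_on (\<alpha> + real j * w k) (\<alpha> + real j * w k + w k) h))"
    by (metis choice)
  then show ?thesis
    using that[of w n hs] w_pos \<beta>_eq \<open>w \<longlonglongrightarrow> 0\<close> by blast
qed

lemma uniform_limit_squeeze:
  fixes f :: "nat \<Rightarrow> 'a \<Rightarrow> real"
  assumes "\<And>k x. x \<in> S \<Longrightarrow> g x \<le> f k x \<and> f k x \<le> g x + \<eta> k" and "\<eta> \<longlonglongrightarrow> 0"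
  shows "uniform_limit S f g sequentially"
proof (rule uniform_limitI)
  fix e :: real assume "0 < e"
  then have "\<forall>\<^sub>F k in sequentially. \<eta> k < e"
    using \<open>\<eta> \<longlonglongrightarrow> 0\<close> by (intro order_tendstoD(2)) auto
  then show "\<forall>\<^sub>F k in sequentially. \<forall>x\<in>S. dist (f k x) (g x) < e"
  proof (rule eventually_mono)
    fix k assume "\<eta> k < e"
    then show "\<forall>x\<in>S. dist (f k x) (g x) < e"
      using assms(1)[of _ k] by (fastforce simp: dist_real_def)
  qed
qed

section \<open>Weak-* convergence of the length measures\<close>

lemma measure_hausdorff1_restr:
  "A \<in> sets borel \<Longrightarrow> measure (hausdorff1_restr S) A = enn2real (hausdorff1 (A \<inter> S))"
  by (simp add: measure_def emeasure_hausdorff1_restr)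

lemma finite_measure_hausdorff1_restr:
  "hausdorff1 S < \<infinity> \<Longrightarrow> finite_measure (hausdorff1_restr S)"
  by (rule finite_measureI) (simp add: emeasure_hausdorff1_restr)

lemma AE_hausdorff1_restr:
  assumes "S \<in> sets borel"
  shows "AE z in hausdorff1_restr S. z \<in> S \<and> z \<noteq> p"
proof -
  define N where "N = - (S - {p})"
  have "N \<in> sets borel"
    using assms by (auto simp: N_def)
  have "emeasure (hausdorff1_restr S) N = hausdorff1 (N \<inter> S)"
    by (rule emeasure_hausdorff1_restr[OF \<open>N \<in> sets borel\<close>])
  also have "\<dots> \<le> hausdorff1 {p}"
    by (rule hausdorff1_mono) (auto simp: N_def)
  finally have "N \<in> null_sets (hausdorff1_restr S)"
    using \<open>N \<in> sets borel\<close> by auto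
  then show ?thesis
    by (rule AE_I') (auto simp: N_def)
qed

lemma measure_hausdorff1_restr_graph_strip:
  assumes "\<alpha> \<le> a" "a \<le> b" "b \<le> \<beta>"
  shows "measure (hausdorff1_restr (graph_on \<alpha> \<beta> g)) ({a..<b} \<times> UNIV) = enn2real (hausdorff1 (graph_on a b g))"
proof -
  have "({a..<b} \<times> UNIV) \<inter> graph_on \<alpha> \<beta> g = graph_on a b g - {(b, g b)}"
    using assms by (auto simp: graph_on_def less_le)
  then show ?thesis
    by (simp add: measure_hausdorff1_restr borel_Times)
qed

lemma sum_indicator_disjoint:
  fixes c :: "'i \<Rightarrow> real"
  assumes "finite I" "disjoint_family_on S I" "j \<in> I" "z \<in> S j"
  shows "(\<Sum>i\<in>I. c i * indicator (S i) z) = c j"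
proof -
  have "(\<Sum>i\<in>I. c i * indicator (S i) z) = (\<Sum>i\<in>I. if i = j then c i else 0)"
    using assms(2-4) by (intro sum.cong) (auto simp: disjoint_family_on_def indicator_def)
  then show ?thesis
    using assms(1,3) by simp
qed

lemma integral_approx_by_step_function:
  fixes \<phi> :: "'a \<Rightarrow> real" and c :: "nat \<Rightarrow> real" and n :: nat
  assumes M: "finite_measure M" and \<phi>: "\<phi> \<in> borel_measurable M"
    and S: "\<And>j. j < n \<Longrightarrow> S j \<in> sets M" "disjoint_family_on S {..<n}"
    and approx: "AE z in M. \<exists>j<n. z \<in> S j \<and> \<bar>\<phi> z - c j\<bar> \<le> \<epsilon>"
  shows "\<bar>integral\<^sup>L M \<phi> - (\<Sum>j<n. c j * measure M (S j))\<bar> \<le> \<epsilon> * measure M (space M)"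
proof -
  interpret finite_measure M by (rule M)
  define s where "s z = (\<Sum>j<n. c j * indicator (S j) z)" for z
  have near: "AE z in M. \<bar>\<phi> z - s z\<bar> \<le> \<epsilon>"
    using approx
  proof eventually_elim
    case (elim z)
    then obtain j where j: "j < n" "z \<in> S j" "\<bar>\<phi> z - c j\<bar> \<le> \<epsilon>" by blast
    then have "s z = c j"
      unfolding s_def by (intro sum_indicator_disjoint[OF _ S(2)]) auto
    then show ?case using j(3) by simp
  qed
  have int_indicator: "integrable M (\<lambda>z. c j * indicator (S j) z)" if "j < n" for j
    using S(1)[OF that] by (intro integrable_mult_right integrable_real_indicator) (auto simp: less_top[symmetric])
  then have int_s: "integrable M s"
    unfolding s_def by (intro Bochner_Integration.integrable_sum) auto
  have "AE z in M. norm (\<phi> z) \<le> (\<Sum>j<n. \<bar>c j\<bar>) + \<epsilon>"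
    using approx
  proof eventually_elim
    case (elim z)
    then obtain j where "j < n" "\<bar>\<phi> z - c j\<bar> \<le> \<epsilon>" by blast
    moreover have "\<bar>c j\<bar> \<le> (\<Sum>j<n. \<bar>c j\<bar>)"
      using \<open>j < n\<close> by (intro member_le_sum) auto
    ultimately show ?case by simp
  qed
  then have int_\<phi>: "integrable M \<phi>"
    using \<phi> by (rule integrable_const_bound)
  have "integral\<^sup>L M s = (\<Sum>j<n. integral\<^sup>L M (\<lambda>z. c j * indicator (S j) z))"
    unfolding s_def by (rule Bochner_Integration.integral_sum, rule int_indicator) simp
  also have "\<dots> = (\<Sum>j<n. c j * measure M (S j))"
    using S(1) by (intro sum.cong) (simp_all add: less_top[symmetric])
  finally have "\<bar>integral\<^sup>L M \<phi> - (\<Sum>j<n. c j * measure M (S j))\<bar> = \<bar>integral\<^sup>L M (\<lambda>z. \<phi> z - s z)\<bar>"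
    using int_\<phi> int_s by simp
  also have "\<dots> \<le> integral\<^sup>L M (\<lambda>z. \<bar>\<phi> z - s z\<bar>)"
    by (rule integral_abs_bound)
  also have "\<dots> \<le> integral\<^sup>L M (\<lambda>z. \<epsilon>)"
    using near int_\<phi> int_s by (intro integral_mono_AE) auto
  finally show ?thesis
    by (simp add: mult.commute)
qed

lemma disjoint_family_on_uniform_strips:
  fixes w :: real
  assumes "0 < w"
  shows "disjoint_family_on (\<lambda>j. {a + real j * w..<a + real j * w + w} \<times> B) J"
  unfolding disjoint_family_on_def
proof (intro ballI impI)
  fix i j :: nat assume "i \<noteq> j"
  then have "a + real i * w + w \<le> a + real j * w \<or> a + real j * w + w \<le> a + real i * w"
    using uniform_cells_ordered[OF assms] by (metis linorder_neqE)
  then show "({a + real i * w..<a + real i * w + w} \<times> B) \<inter> ({a + real j * w..<a + real j * w + w} \<times> B) = {}"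
    by auto
qed

lemma integral_hausdorff1_graph_approx:
  fixes \<phi> :: "real \<times> real \<Rightarrow> real" and g :: "real \<Rightarrow> real"
  assumes w: "0 < w" "\<beta> = \<alpha> + real n * w"
    and g: "continuous_on {\<alpha>..\<beta>} g" "hausdorff1 (graph_on \<alpha> \<beta> g) < \<infinity>"
    and \<phi>: "continuous_on UNIV \<phi>"
    and near: "\<And>j x. j < n \<Longrightarrow> \<alpha> + real j * w \<le> x \<Longrightarrow> x < \<alpha> + real j * w + w \<Longrightarrow> \<bar>\<phi> (x, g x) - c j\<bar> \<le> \<epsilon>"
  shows "\<bar>integral\<^sup>L (hausdorff1_restr (graph_on \<alpha> \<beta> g)) \<phi>
      - (\<Sum>j<n. c j * measure (hausdorff1_restr (graph_on \<alpha> \<beta> g)) ({\<alpha> + real j * w..<\<alpha> + real j * w + w} \<times> UNIV))\<bar>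
    \<le> \<epsilon> * measure (hausdorff1_restr (graph_on \<alpha> \<beta> g)) UNIV"
proof -
  define G where "G = graph_on \<alpha> \<beta> g"
  have G_borel: "G \<in> sets borel"
    unfolding G_def graph_on_eq_image
    by (intro borel_closed compact_imp_closed compact_continuous_image continuous_on_Pair continuous_on_id g) simp
  have "AE z in hausdorff1_restr G. \<exists>j<n. z \<in> {\<alpha> + real j * w..<\<alpha> + real j * w + w} \<times> UNIV
      \<and> \<bar>\<phi> z - c j\<bar> \<le> \<epsilon>"
    using AE_hausdorff1_restr[OF G_borel, of "(\<beta>, g \<beta>)"]
  proof eventually_elim
    case (elim z)
    then obtain x where x: "x \<in> {\<alpha>..\<beta>}" "z = (x, g x)"
      by (auto simp: G_def graph_on_def)
    moreover have "x \<noteq> \<beta>"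
      using elim x(2) by auto
    ultimately have "\<alpha> \<le> x" "x < \<alpha> + real n * w"
      using w(2) by auto
    then obtain j where "j < n" "\<alpha> + real j * w \<le> x" "x < \<alpha> + real j * w + w"
      using uniform_cell_locate[OF w(1)] by blast
    then show ?case
      using near x(2) by auto
  qed
  then have "\<bar>integral\<^sup>L (hausdorff1_restr G) \<phi>
      - (\<Sum>j<n. c j * measure (hausdorff1_restr G) ({\<alpha> + real j * w..<\<alpha> + real j * w + w} \<times> UNIV))\<bar>
    \<le> \<epsilon> * measure (hausdorff1_restr G) (space (hausdorff1_restr G))"
    using g(2) borel_measurable_continuous_onI[OF \<phi>] disjoint_family_on_uniform_strips[OF w(1)]
    by (intro integral_approx_by_step_function finite_measure_hausdorff1_restr)
      (auto simp: G_def borel_Times measurable_cong_sets[OF sets_hausdorff1_restr refl])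
  then show ?thesis
    by (simp add: G_def)
qed

lemma dist_graph_point_le:
  fixes h g :: "real \<Rightarrow> real"
  assumes h: "L-lipschitz_on {\<alpha>..\<beta>} h" and g: "h x \<le> g x" "g x \<le> h x + \<eta>"
    and "a \<in> {\<alpha>..\<beta>}" "x \<in> {\<alpha>..\<beta>}" "a \<le> x" "x \<le> a + w"
  shows "dist (x, g x) (a, h a) \<le> w + \<eta> + L * w"
proof -
  have "dist (x, g x) (a, h a) \<le> dist x a + dist (g x) (h a)"
    unfolding dist_Pair_Pair by (rule sqrt_sum_squares_le_sum) auto
  also have "dist (g x) (h a) \<le> dist (g x) (h x) + dist (h x) (h a)"
    by (rule dist_triangle)
  also have "dist (h x) (h a) \<le> L * dist x a"
    using assms by (intro lipschitz_onD[OF h]) auto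
  also have "L * dist x a \<le> L * w"
    using assms lipschitz_on_nonneg[OF h] by (intro mult_left_mono) (auto simp: dist_real_def)
  finally show ?thesis
    using assms by (simp add: dist_real_def)
qed

lemma integral_hausdorff1_graph_riemann_sum:
  fixes \<phi> :: "real \<times> real \<Rightarrow> real" and g h :: "real \<Rightarrow> real"
  assumes w: "0 < w" "\<beta> = \<alpha> + real n * w"
    and h: "L-lipschitz_on {\<alpha>..\<beta>} h"
    and g: "continuous_on {\<alpha>..\<beta>} g" "hausdorff1 (graph_on \<alpha> \<beta> g) < \<infinity>"
      "\<And>x. x \<in> {\<alpha>..\<beta>} \<Longrightarrow> h x \<le> g x \<and> g x \<le> h x + \<eta>"
    and K: "graph_on \<alpha> \<beta> g \<subseteq> K" "graph_on \<alpha> \<beta> h \<subseteq> K"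
    and \<phi>: "continuous_on UNIV \<phi>"
      "\<And>z z'. z \<in> K \<Longrightarrow> z' \<in> K \<Longrightarrow> dist z z' \<le> w + \<eta> + L * w \<Longrightarrow> \<bar>\<phi> z - \<phi> z'\<bar> \<le> \<epsilon>"
  shows "\<bar>integral\<^sup>L (hausdorff1_restr (graph_on \<alpha> \<beta> g)) \<phi>
      - (\<Sum>j<n. \<phi> (\<alpha> + real j * w, h (\<alpha> + real j * w))
          * measure (hausdorff1_restr (graph_on \<alpha> \<beta> g)) ({\<alpha> + real j * w..<\<alpha> + real j * w + w} \<times> UNIV))\<bar>
    \<le> \<epsilon> * measure (hausdorff1_restr (graph_on \<alpha> \<beta> g)) UNIV"
proof (rule integral_hausdorff1_graph_approx[OF w g(1,2) \<phi>(1)])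
  fix j x assume j: "j < n" "\<alpha> + real j * w \<le> x" "x < \<alpha> + real j * w + w"
  have "0 \<le> real j * w" "\<alpha> + real j * w + w \<le> \<beta>"
    using uniform_cells_ordered[OF w(1) j(1), of \<alpha>] w by simp_all
  then have x: "x \<in> {\<alpha>..\<beta>}" and a: "\<alpha> + real j * w \<in> {\<alpha>..\<beta>}"
    unfolding atLeastAtMost_iff using j(2,3) by (intro conjI; linarith)+
  have "(x, g x) \<in> K" "(\<alpha> + real j * w, h (\<alpha> + real j * w)) \<in> K"
    using K x a by (auto simp: graph_on_def)
  moreover have "dist (x, g x) (\<alpha> + real j * w, h (\<alpha> + real j * w)) \<le> w + \<eta> + L * w"
    using dist_graph_point_le[OF h _ _ a x] g(3)[OF x] j by simp
  ultimately show "\<bar>\<phi> (x, g x) - \<phi> (\<alpha> + real j * w, h (\<alpha> + real j * w))\<bar> \<le> \<epsilon>"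
    by (rule \<phi>(2))
qed

lemma tendsto_if_eventually_dist_le:
  assumes "0 \<le> C" and le: "\<And>\<epsilon>. 0 < \<epsilon> \<Longrightarrow> \<forall>\<^sub>F x in F. dist (f x) l \<le> \<epsilon> * C"
  shows "(f \<longlongrightarrow> l) F"
proof (rule tendsto_iff[THEN iffD2], intro allI impI)
  fix e :: real assume "0 < e"
  have "e / (C + 1) * C < e"
    using \<open>0 < e\<close> \<open>0 \<le> C\<close> by (simp add: field_simps)
  then show "\<forall>\<^sub>F x in F. dist (f x) l < e"
    using le[of "e / (C + 1)"] \<open>0 < e\<close> \<open>0 \<le> C\<close> by (auto elim: eventually_mono)
qed

lemma compact_box_contains_graphs:
  fixes h :: "real \<Rightarrow> real" and f :: "nat \<Rightarrow> real \<Rightarrow> real"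
  assumes h: "continuous_on {\<alpha>..\<beta>} h" and \<eta>: "\<eta> \<longlonglongrightarrow> 0"
    and f: "\<And>k x. x \<in> {\<alpha>..\<beta>} \<Longrightarrow> h x \<le> f k x \<and> f k x \<le> h x + \<eta> k"
  obtains K where "compact K" "graph_on \<alpha> \<beta> h \<subseteq> K" "\<And>k. graph_on \<alpha> \<beta> (f k) \<subseteq> K"
proof -
  have "bounded (h ` {\<alpha>..\<beta>})"
    by (intro compact_imp_bounded compact_continuous_image h compact_Icc)
  then obtain B where B: "\<forall>x\<in>{\<alpha>..\<beta>}. \<bar>h x\<bar> \<le> B"
    by (auto simp: bounded_real)
  obtain E where E: "\<And>k. \<bar>\<eta> k\<bar> \<le> E"
    using convergent_imp_Bseq[OF convergentI[OF \<eta>]] by (metis BseqE real_norm_def)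
  have "(x, f k x) \<in> {\<alpha>..\<beta>} \<times> {-B..B + E}" "(x, h x) \<in> {\<alpha>..\<beta>} \<times> {-B..B + E}"
    if "x \<in> {\<alpha>..\<beta>}" for k x
  proof -
    have "\<bar>h x\<bar> \<le> B" "\<eta> k \<le> E" "h x \<le> f k x" "f k x \<le> h x + \<eta> k"
      using B that E[of k] f[OF that, of k] by auto
    then show "(x, f k x) \<in> {\<alpha>..\<beta>} \<times> {-B..B + E}" "(x, h x) \<in> {\<alpha>..\<beta>} \<times> {-B..B + E}"
      using that E[of k] by auto
  qed
  then show ?thesis
    by (intro that[of "{\<alpha>..\<beta>} \<times> {-B..B + E}"] compact_Times compact_Icc) (auto simp: graph_on_def)
qed

text \<open>Both integrals are approximated by Riemann sums sampling at the same points, and on every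
  strip over a cell the measure of the graph of \<open>f\<close> is \<open>r\<close> times that of the graph of \<open>h\<close>.\<close>
lemma integral_hausdorff1_graph_scaled_approx:
  fixes \<phi> :: "real \<times> real \<Rightarrow> real" and f h :: "real \<Rightarrow> real"
  assumes w: "0 < w" "\<beta> = \<alpha> + real n * w" and h: "L-lipschitz_on {\<alpha>..\<beta>} h" and "0 \<le> r"
    and f: "continuous_on {\<alpha>..\<beta>} f" "\<And>x. x \<in> {\<alpha>..\<beta>} \<Longrightarrow> h x \<le> f x \<and> f x \<le> h x + \<eta>"
    and cells: "\<And>j. j < n \<Longrightarrow> hausdorff1 (graph_on (\<alpha> + real j * w) (\<alpha> + real j * w + w) f)
      = ennreal r * hausdorff1 (graph_on (\<alpha> + real j * w) (\<alpha> + real j * w + w) h)"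
    and K: "graph_on \<alpha> \<beta> f \<subseteq> K" "graph_on \<alpha> \<beta> h \<subseteq> K"
    and \<phi>: "continuous_on UNIV \<phi>"
      "\<And>z z'. z \<in> K \<Longrightarrow> z' \<in> K \<Longrightarrow> dist z z' \<le> w + \<eta> + L * w \<Longrightarrow> \<bar>\<phi> z - \<phi> z'\<bar> \<le> \<epsilon>"
  shows "\<bar>integral\<^sup>L (hausdorff1_restr (graph_on \<alpha> \<beta> f)) \<phi> - r * integral\<^sup>L (hausdorff1_restr (graph_on \<alpha> \<beta> h)) \<phi>\<bar>
    \<le> 2 * r * enn2real (hausdorff1 (graph_on \<alpha> \<beta> h)) * \<epsilon>"
proof -
  define \<mu> where "\<mu> = hausdorff1_restr (graph_on \<alpha> \<beta> h)"
  define \<mu>f where "\<mu>f = hausdorff1_restr (graph_on \<alpha> \<beta> f)"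
  define H where "H = enn2real (hausdorff1 (graph_on \<alpha> \<beta> h))"
  define S where "S \<nu> = (\<Sum>j<n. \<phi> (\<alpha> + real j * w, h (\<alpha> + real j * w))
      * measure \<nu> ({\<alpha> + real j * w..<\<alpha> + real j * w + w} \<times> UNIV))" for \<nu> :: "(real \<times> real) measure"
  have H: "hausdorff1 (graph_on \<alpha> \<beta> h) = ennreal H" "0 \<le> H"
    using hausdorff1_graph_finite[OF h] by (simp_all add: H_def ennreal_enn2real_if less_top)
  have total: "hausdorff1 (graph_on \<alpha> \<beta> f) = ennreal (r * H)"
    using hausdorff1_graph_scaled_if_cellwise[OF less_imp_le[OF w(1)] w(2) cells] H \<open>0 \<le> r\<close>
    by (simp add: ennreal_mult)
  have "0 \<le> \<eta>"
    using f(2)[of \<alpha>] w by simp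
  have approx_f: "\<bar>integral\<^sup>L \<mu>f \<phi> - S \<mu>f\<bar> \<le> \<epsilon> * (r * H)"
    using integral_hausdorff1_graph_riemann_sum[OF w h f(1) _ f(2) K \<phi>] total \<open>0 \<le> r\<close> H(2)
    by (simp add: \<mu>f_def S_def measure_hausdorff1_restr)
  have approx_h: "\<bar>integral\<^sup>L \<mu> \<phi> - S \<mu>\<bar> \<le> \<epsilon> * H"
    using integral_hausdorff1_graph_riemann_sum[OF w h lipschitz_on_continuous_on[OF h] _ _ K(2,2) \<phi>]
      \<open>0 \<le> \<eta>\<close> H
    by (simp add: \<mu>_def S_def measure_hausdorff1_restr)
  have "S \<mu>f = r * S \<mu>"
  proof -
    have "measure \<mu>f ({\<alpha> + real j * w..<\<alpha> + real j * w + w} \<times> UNIV)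
        = r * measure \<mu> ({\<alpha> + real j * w..<\<alpha> + real j * w + w} \<times> UNIV)" if "j < n" for j
      using uniform_cells_ordered[OF w(1) that, of \<alpha>] w cells[OF that] \<open>0 \<le> r\<close>
      by (simp add: \<mu>_def \<mu>f_def measure_hausdorff1_restr_graph_strip enn2real_mult)
    then show ?thesis
      unfolding S_def sum_distrib_left by (intro sum.cong refl) (simp add: mult.left_commute)
  qed
  moreover have "\<bar>r * integral\<^sup>L \<mu> \<phi> - r * S \<mu>\<bar> \<le> r * (\<epsilon> * H)"
    using mult_left_mono[OF approx_h \<open>0 \<le> r\<close>] \<open>0 \<le> r\<close> by (simp add: abs_mult right_diff_distrib[symmetric])
  ultimately have "\<bar>integral\<^sup>L \<mu>f \<phi> - r * integral\<^sup>L \<mu> \<phi>\<bar> \<le> \<epsilon> * (r * H) + r * (\<epsilon> * H)"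
    using approx_f unfolding abs_le_iff by linarith
  then show ?thesis
    by (simp add: \<mu>_def \<mu>f_def H_def algebra_simps)
qed

lemma weak_star_conv_hausdorff1_graphs:
  fixes h :: "real \<Rightarrow> real" and f :: "nat \<Rightarrow> real \<Rightarrow> real"
  assumes h: "L-lipschitz_on {\<alpha>..\<beta>} h" and "0 \<le> r"
    and f: "\<And>k. continuous_on {\<alpha>..\<beta>} (f k)" "\<And>k x. x \<in> {\<alpha>..\<beta>} \<Longrightarrow> h x \<le> f k x \<and> f k x \<le> h x + \<eta> k"
    and \<eta>: "\<eta> \<longlonglongrightarrow> 0"
    and w: "\<And>k. 0 < w k" "\<And>k. \<beta> = \<alpha> + real (n k) * w k" "w \<longlonglongrightarrow> 0"
    and cells: "\<And>k j. j < n k \<Longrightarrow> hausdorff1 (graph_on (\<alpha> + real j * w k) (\<alpha> + real j * w k + w k) (f k))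
      = ennreal r * hausdorff1 (graph_on (\<alpha> + real j * w k) (\<alpha> + real j * w k + w k) h)"
  shows "weak_star_conv (\<lambda>k. hausdorff1_restr (graph_on \<alpha> \<beta> (f k))) r (hausdorff1_restr (graph_on \<alpha> \<beta> h))"
  unfolding weak_star_conv_def
proof (intro allI impI)
  fix \<phi> :: "real \<times> real \<Rightarrow> real"
  assume "continuous_on UNIV \<phi> \<and> compact (closure {z. \<phi> z \<noteq> 0})"
  then have \<phi>: "continuous_on UNIV \<phi>" by simp
  obtain K where "compact K" and K: "graph_on \<alpha> \<beta> h \<subseteq> K" "\<And>k. graph_on \<alpha> \<beta> (f k) \<subseteq> K"
    using compact_box_contains_graphs[OF lipschitz_on_continuous_on[OF h] \<eta> f(2)] by blast
  have "uniformly_continuous_on K \<phi>"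
    by (intro compact_uniformly_continuous continuous_on_subset[OF \<phi>] \<open>compact K\<close>) auto
  show "(\<lambda>k. integral\<^sup>L (hausdorff1_restr (graph_on \<alpha> \<beta> (f k))) \<phi>)
      \<longlonglongrightarrow> r * integral\<^sup>L (hausdorff1_restr (graph_on \<alpha> \<beta> h)) \<phi>"
  proof (rule tendsto_if_eventually_dist_le)
    show "0 \<le> 2 * r * enn2real (hausdorff1 (graph_on \<alpha> \<beta> h))"
      using \<open>0 \<le> r\<close> by simp
    fix \<epsilon> :: real assume "0 < \<epsilon>"
    then obtain \<delta> where "\<delta> > 0" and \<delta>: "\<And>z z'. z \<in> K \<Longrightarrow> z' \<in> K \<Longrightarrow> dist z z' < \<delta> \<Longrightarrow> \<bar>\<phi> z - \<phi> z'\<bar> \<le> \<epsilon>"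
      using \<open>uniformly_continuous_on K \<phi>\<close> unfolding uniformly_continuous_on_def dist_real_def
      by (metis dist_commute less_imp_le)
    have "(\<lambda>k. w k + \<eta> k + L * w k) \<longlonglongrightarrow> 0 + 0 + L * 0"
      by (intro tendsto_add tendsto_mult w(3) \<eta> tendsto_const)
    then have "\<forall>\<^sub>F k in sequentially. w k + \<eta> k + L * w k < \<delta>"
      using \<open>\<delta> > 0\<close> by (intro order_tendstoD(2)) auto
    then show "\<forall>\<^sub>F k in sequentially. dist (integral\<^sup>L (hausdorff1_restr (graph_on \<alpha> \<beta> (f k))) \<phi>)
        (r * integral\<^sup>L (hausdorff1_restr (graph_on \<alpha> \<beta> h)) \<phi>) \<le> \<epsilon> * (2 * r * enn2real (hausdorff1 (graph_on \<alpha> \<beta> h)))"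
    proof (rule eventually_mono)
      fix k assume "w k + \<eta> k + L * w k < \<delta>"
      then show "dist (integral\<^sup>L (hausdorff1_restr (graph_on \<alpha> \<beta> (f k))) \<phi>)
          (r * integral\<^sup>L (hausdorff1_restr (graph_on \<alpha> \<beta> h)) \<phi>) \<le> \<epsilon> * (2 * r * enn2real (hausdorff1 (graph_on \<alpha> \<beta> h)))"
        using integral_hausdorff1_graph_scaled_approx[OF w(1,2) h \<open>0 \<le> r\<close> f(1) f(2) cells K(2) K(1) \<phi>,
            where \<epsilon> = \<epsilon>] \<delta>
        by (simp add: dist_real_def mult.commute)
    qed
  qed
qed

theorem proposition5p5:
  fixes h :: "real \<Rightarrow> real" and \<alpha> \<beta> r :: real
  assumes "\<alpha> < \<beta>"
    and "\<exists>L. L-lipschitz_on {\<alpha>..\<beta>} h"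
    and "\<forall>x\<in>{\<alpha>..\<beta>}. h x \<ge> 0"
    and "r \<ge> 1"
  shows "\<exists>hs :: nat \<Rightarrow> real \<Rightarrow> real.
     (\<forall>k. (\<exists>L. L-lipschitz_on {\<alpha>..\<beta>} (hs k)) \<and> (\<forall>x\<in>{\<alpha>..\<beta>}. hs k x \<ge> 0)) \<and>
     (\<forall>k. hausdorff1 (graph_on \<alpha> \<beta> (hs k)) = ennreal r * hausdorff1 (graph_on \<alpha> \<beta> h)) \<and>
     (\<forall>k. hs k \<alpha> = h \<alpha> \<and> hs k \<beta> = h \<beta>) \<and>
     (\<forall>k. \<forall>x\<in>{\<alpha>..\<beta>}. h x \<le> hs k x) \<and>
     uniform_limit {\<alpha>..\<beta>} hs h sequentially \<and>
     weak_star_conv (\<lambda>k. hausdorff1_restr (graph_on \<alpha> \<beta> (hs k))) r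
                    (hausdorff1_restr (graph_on \<alpha> \<beta> h))"
proof -
  obtain L where h: "L-lipschitz_on {\<alpha>..\<beta>} h"
    using assms(2) by blast
  obtain w n hs where w: "\<And>k. 0 < w k" "\<And>k. \<beta> = \<alpha> + real (n k) * w k" "w \<longlonglongrightarrow> 0"
    and lip: "\<And>k. \<exists>L'. L'-lipschitz_on {\<alpha>..\<beta>} (hs k)"
    and between: "\<And>k x. x \<in> {\<alpha>..\<beta>} \<Longrightarrow> h x \<le> hs k x \<and> hs k x \<le> h x + 1 / real (Suc k)"
    and ends: "\<And>k. hs k \<alpha> = h \<alpha> \<and> hs k \<beta> = h \<beta>"
    and cells: "\<And>k j. j < n k \<Longrightarrow> hausdorff1 (graph_on (\<alpha> + real j * w k) (\<alpha> + real j * w k + w k) (hs k))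
      = ennreal r * hausdorff1 (graph_on (\<alpha> + real j * w k) (\<alpha> + real j * w k + w k) h)"
    by (rule exists_cellwise_scaled_graph_sequence[OF h assms(1,4)], rule that)
  have heights: "(\<lambda>k. 1 / real (Suc k)) \<longlonglongrightarrow> 0"
    by (rule LIMSEQ_Suc[OF lim_1_over_n])
  have "continuous_on {\<alpha>..\<beta>} (hs k)" for k
    using lip[of k] lipschitz_on_continuous_on by blast
  then have weak: "weak_star_conv (\<lambda>k. hausdorff1_restr (graph_on \<alpha> \<beta> (hs k))) r
      (hausdorff1_restr (graph_on \<alpha> \<beta> h))"
    using assms(4) by (intro weak_star_conv_hausdorff1_graphs[OF h _ _ between heights w cells]) auto
  have uniform: "uniform_limit {\<alpha>..\<beta>} hs h sequentially"
    by (rule uniform_limit_squeeze[OF between heights])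
  have length: "hausdorff1 (graph_on \<alpha> \<beta> (hs k)) = ennreal r * hausdorff1 (graph_on \<alpha> \<beta> h)" for k
    by (rule hausdorff1_graph_scaled_if_cellwise[OF less_imp_le[OF w(1)] w(2) cells])
  have above: "h x \<le> hs k x" and nonneg: "0 \<le> hs k x" if "x \<in> {\<alpha>..\<beta>}" for k x
    using assms(3) between[OF that, of k] that by (auto intro: order_trans)
  show ?thesis
    by (intro exI[of _ hs] conjI allI ballI lip length ends above nonneg uniform weak)
qed

end
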